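(* Let $p,q$ be distinct odd primes, $G=\mathrm{Gal}(\mathbb{Q}(\zeta_p)/\mathbb{Q})$, and $\theta=\sum_{\tau\in G}n_\tau\tau\in(1+\iota)\mathbb{Z}[G]$. Let $F=F_\theta(T)=\prod_{\tau\in G}(1-\tau(\zeta_p)T)^{n_\tau/q}\in\mathbb{Q}(\zeta_p)[[T]]$. Then (a) $F\in\mathbb{Q}(\zeta_p^+)[[T]]$; (b) if $t\in\mathbb{Q}$ with $|t|<1$ and there is $\alpha\in\mathbb{Q}(\zeta_p)$ with $(1-t\zeta_p)^\theta=\alpha^q$, then $\alpha\in\mathbb{Q}(\zeta_p^+)$ and $F^\sigma(t)=\sigma(\alpha)$ for every $\sigma\in G$.
   Context: $\zeta_p=e^{2i\pi/p}$, $\zeta_p^+=\zeta_p+\zeta_p^{-1}$, $\iota$ is complex conjugation. The factors are formal binomial series $(1-\tau(\zeta_p)T)^{n_\tau/q}=\sum_{k\ge0}\binom{n_\tau/q}{k}(-\tau(\zeta_p)T)^k$. $\mathbb{Z}[G]$ acts on $\mathbb{Q}(\zeta_p)^*$ by $z^{\sum n_\tau\tau}=\prod\tau(z)^{n_\tau}$. $F^\sigma$ is obtained by applying $\sigma$ to the coefficients of $F$. *)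

theory Defs
  imports Complex_Main "HOL-Computational_Algebra.Formal_Power_Series"
begin

definition zeta :: "nat \<Rightarrow> complex" where
  "zeta p = cis (2 * pi / real p)"

text \<open>The field Q(zeta_p) inside C (for p prime it is the Q-span of 1, zeta, ..., zeta^(p-1)).\<close>
definition Qzeta :: "nat \<Rightarrow> complex set" where
  "Qzeta p = {z. \<exists>c :: nat \<Rightarrow> rat. z = (\<Sum>k<p. of_rat (c k) * zeta p ^ k)}"

definition Qzeta_plus :: "nat \<Rightarrow> complex set" where
  "Qzeta_plus p = {z. \<exists>c :: nat \<Rightarrow> rat.
     z = (\<Sum>k<p. of_rat (c k) * (zeta p + inverse (zeta p)) ^ k)}"

text \<open>The Galois group Gal(Q(zeta_p)/Q): field automorphisms of Q(zeta_p)
  (every ring automorphism fixes Q). Values outside Q(zeta_p) are irrelevant.\<close>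
definition gal :: "nat \<Rightarrow> (complex \<Rightarrow> complex) set" where
  "gal p = {\<sigma>. (\<forall>x\<in>Qzeta p. \<forall>y\<in>Qzeta p. \<sigma> (x + y) = \<sigma> x + \<sigma> y \<and> \<sigma> (x * y) = \<sigma> x * \<sigma> y)
               \<and> \<sigma> 1 = 1 \<and> bij_betw \<sigma> (Qzeta p) (Qzeta p)}"

text \<open>Formal binomial series (1 - c T)^r = sum_k (r choose k) (-c T)^k.\<close>
definition binom_fps :: "complex \<Rightarrow> complex \<Rightarrow> complex fps" where
  "binom_fps c r = Abs_fps (\<lambda>k. (r gchoose k) * (- c) ^ k)"

text \<open>G is identified with (Z/p)^* via tau_a(zeta_p) = zeta_p^a, a = 1..p-1;
  theta = sum_a n(a) tau_a. F_theta = prod_a (1 - zeta_p^a T)^(n(a)/q).\<close>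
definition F_theta :: "nat \<Rightarrow> nat \<Rightarrow> (nat \<Rightarrow> int) \<Rightarrow> complex fps" where
  "F_theta p q n = (\<Prod>a\<in>{1..p-1}. binom_fps (zeta p ^ a) (of_int (n a) / of_nat q))"

end

(*
  For (a), every coefficient of F is a rational combination of powers of zeta_p. Complex
  conjugation turns the factor (1 - zeta_p^a T)^(n_a/q) into (1 - zeta_p^(p-a) T)^(n_a/q), and
  theta in (1 + iota)Z[G] means n_(p-a) = n_a, so the coefficients are real; real elements of
  Q(zeta_p) lie in Q(zeta_p^+).

  For (b), F^sigma(t) converges to a real q-th root of (1 - t sigma(zeta_p))^theta, while
  sigma(alpha) is a q-th root of the same number lying in Q(zeta_p). As q is odd, it suffices to
  see that sigma(alpha) is real, i.e. that Q(zeta_p) contains no q-th root of unity other than 1.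
  Clearing denominators, this says that u^q = v^q with u, v in Z[zeta_p] and v <> 0 forces u = v.
  Otherwise omega = u/v is a primitive q-th root of unity, and Frobenius modulo q together with
  prod_(k=1..q-1) (1 - omega^k) = q shows that q divides both u and v; infinite descent then
  contradicts the linear independence of 1, zeta_p, ..., zeta_p^(p-2), which comes from
  Eisenstein's criterion.
*)
theory Submission
  imports Defs "HOL-Analysis.Analysis"
begin

section \<open>Roots of unity\<close>

lemma zeta_power: "zeta p ^ k = cis (2 * pi * real k / real p)"
proof -
  have "zeta p ^ k = cis (real k * (2 * pi / real p))"
    unfolding zeta_def by (rule Complex.DeMoivre)
  also have "real k * (2 * pi / real p) = 2 * pi * real k / real p"
    by simp
  finally show ?thesis .
qed

lemma zeta_power_p [simp]: "p > 0 \<Longrightarrow> zeta p ^ p = 1"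
  by (simp add: zeta_power)

lemma zeta_power_mod: "p > 0 \<Longrightarrow> zeta p ^ (k mod p) = zeta p ^ k"
  by (metis div_mult_mod_eq mult.commute mult_1 power_add power_mult power_one zeta_power_p)

lemma zeta_neq_1:
  assumes "p > 1" shows "zeta p \<noteq> 1"
proof -
  have inj: "inj_on (\<lambda>k. cis (2 * pi * real k / real p)) {..<p}"
    using Complex.bij_betw_roots_unity[of p] assms by (simp add: bij_betw_def)
  have "(1::nat) = 0" if "cis (2 * pi * real 1 / real p) = cis (2 * pi * real 0 / real p)"
    using inj_onD[OF inj that] assms by simp
  thus ?thesis by (auto simp: zeta_def)
qed

lemma zeta_neq_0 [simp]: "zeta p \<noteq> 0"
  by (simp add: zeta_def)

lemma complex_of_rat_eq_of_real: "(of_rat r :: complex) = of_real (of_rat r)"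
proof -
  obtain a b where ab: "quotient_of r = (a, b)" by (metis surj_pair)
  have "(of_rat r :: complex) = of_int a / of_int b"
    using quotient_of_div[OF ab] by (simp add: of_rat_divide)
  moreover have "(of_rat r :: real) = of_int a / of_int b"
    using quotient_of_div[OF ab] by (simp add: of_rat_divide)
  ultimately show ?thesis by simp
qed

lemma cnj_of_rat [simp]: "cnj (of_rat r) = of_rat r"
  by (simp add: complex_of_rat_eq_of_real)

lemma norm_root_of_unity: "(\<xi> :: complex) ^ p = 1 \<Longrightarrow> p > 0 \<Longrightarrow> norm \<xi> = 1"
  using power_eq_1_iff by blast

lemma cnj_root_of_unity_power:
  fixes \<xi> :: complex
  assumes "\<xi> ^ p = 1" "p > 0" "a \<le> p"
  shows "cnj \<xi> ^ a = \<xi> ^ (p - a)"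
proof -
  have "cnj \<xi> * \<xi> = 1"
    using norm_root_of_unity[OF assms(1,2)] complex_norm_square[of \<xi>] by (simp add: mult.commute)
  hence "cnj \<xi> ^ a * \<xi> ^ a = 1"
    by (metis power_mult_distrib power_one)
  moreover have "\<xi> ^ (p - a) * \<xi> ^ a = 1"
    using assms by (simp flip: power_add)
  moreover have "\<xi> ^ a \<noteq> 0"
    using assms(1,2) by (auto simp: power_0_left)
  ultimately show ?thesis
    by (metis mult_right_cancel)
qed

lemma prime_root_of_unity_power_eq_1_iff:
  fixes \<omega> :: "'a::monoid_mult"
  assumes "prime q" "\<omega> ^ q = 1" "\<omega> \<noteq> 1"
  shows "\<omega> ^ k = 1 \<longleftrightarrow> q dvd k"
proof
  assume k: "\<omega> ^ k = 1"
  show "q dvd k"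
  proof (rule ccontr)
    assume "\<not> q dvd k"
    hence "k \<noteq> 0" by (metis dvd_0_right)
    have "coprime q k"
      using assms(1) \<open>\<not> q dvd k\<close> by (rule prime_imp_coprime)
    hence "gcd k q = 1"
      by (simp add: coprime_iff_gcd_eq_1 gcd.commute)
    then obtain x y where xy: "k * x = q * y + 1"
      using bezout_nat[OF \<open>k \<noteq> 0\<close>, of q] by auto
    have "(\<omega> ^ k) ^ x = \<omega> ^ (q * y + 1)"
      by (simp only: power_mult[symmetric] xy)
    also have "\<dots> = (\<omega> ^ q) ^ y * \<omega>"
      by (simp only: power_add power_mult power_one_right)
    finally show False
      using k assms(2,3) by simp
  qed
qed (use assms(2) in \<open>auto simp: power_mult elim!: dvdE\<close>)

lemma poly_eqI_card_agree:
  fixes A B :: "'a::idom poly"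
  assumes "degree A \<le> n" "degree B \<le> n" "coeff A n = coeff B n"
    and "finite S" "card S = n" "\<And>x. x \<in> S \<Longrightarrow> poly A x = poly B x"
  shows "A = B"
proof (rule ccontr)
  assume "A \<noteq> B"
  hence D: "A - B \<noteq> 0" by simp
  have "degree (A - B) \<noteq> n"
  proof
    assume "degree (A - B) = n"
    hence "lead_coeff (A - B) = 0" using assms(3) by simp
    thus False using D by (simp only: leading_coeff_0_iff)
  qed
  moreover have "degree (A - B) \<le> n"
    using assms(1,2) by (simp add: degree_diff_le)
  moreover have "card S \<le> card {x. poly (A - B) x = 0}"
    using assms(6) by (intro card_mono poly_roots_finite[OF D]) auto
  ultimately show False
    using card_poly_roots_bound[OF D] assms(5) by linarith
qed

lemma inj_on_power_prime_root_of_unity: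
  fixes \<omega> :: "'a::idom"
  assumes q: "prime q" and \<omega>: "\<omega> ^ q = 1" "\<omega> \<noteq> 1"
  shows "inj_on (\<lambda>k. \<omega> ^ k) {..<q}"
proof -
  have "\<omega> \<noteq> 0" using \<omega>(1) prime_gt_0_nat[OF q] by (auto simp: power_0_left)
  have eq_if_le: "i = j" if "i \<le> j" "j < q" "\<omega> ^ i = \<omega> ^ j" for i j
  proof -
    have "\<omega> ^ i * \<omega> ^ (j - i) = \<omega> ^ j"
      using that(1) by (simp flip: power_add)
    hence "\<omega> ^ (j - i) = 1"
      using that(3) \<open>\<omega> \<noteq> 0\<close> by simp
    hence "q dvd j - i"
      using prime_root_of_unity_power_eq_1_iff[OF q \<omega>] by simp
    thus "i = j" using that by (auto dest: dvd_imp_le)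
  qed
  show ?thesis
  proof (rule inj_onI)
    fix i j assume "i \<in> {..<q}" "j \<in> {..<q}" "\<omega> ^ i = \<omega> ^ j"
    thus "i = j" using nat_le_linear[of i j] eq_if_le[of i j] eq_if_le[of j i] by auto
  qed
qed

lemma prod_one_minus_prime_root_of_unity:
  fixes \<omega> :: complex
  assumes q: "prime q" and \<omega>: "\<omega> ^ q = 1" "\<omega> \<noteq> 1"
  shows "(\<Prod>k\<in>{1..q-1}. 1 - \<omega> ^ k) = of_nat q"
proof -
  have q1: "q > 1" using q prime_gt_1_nat by blast
  have inj: "inj_on (\<lambda>k. \<omega> ^ k) {1..q-1}"
    by (rule inj_on_subset[OF inj_on_power_prime_root_of_unity[OF q \<omega>]]) (use q1 in auto)
  define A :: "complex poly" where "A = (\<Sum>j<q. monom 1 j)"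
  define B :: "complex poly" where "B = (\<Prod>k\<in>{1..q-1}. [:- (\<omega> ^ k), 1:])"
  have dB: "degree B = q - 1"
    unfolding B_def by (subst degree_prod_eq_sum_degree) auto
  have "A = B"
  proof (rule poly_eqI_card_agree)
    show "degree A \<le> q - 1"
      unfolding A_def by (rule degree_le) (auto simp: coeff_sum)
    show "degree B \<le> q - 1"
      using dB by simp
    have "coeff A (q - 1) = 1"
      using q1 by (simp add: A_def coeff_sum)
    moreover have "lead_coeff B = 1"
      unfolding B_def by (simp add: lead_coeff_prod)
    ultimately show "coeff A (q - 1) = coeff B (q - 1)"
      using dB by simp
    show "card ((\<lambda>k. \<omega> ^ k) ` {1..q-1}) = q - 1"
      using inj by (simp add: card_image)
    show "poly A x = poly B x" if x: "x \<in> (\<lambda>k. \<omega> ^ k) ` {1..q-1}" for x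
    proof -
      obtain k where k: "k \<in> {1..q-1}" "x = \<omega> ^ k" using x by blast
      have "x ^ q = (\<omega> ^ q) ^ k"
        unfolding k(2) by (simp only: power_mult[symmetric] mult.commute)
      hence "x ^ q = 1" using \<omega>(1) by simp
      moreover have "x \<noteq> 1"
        using k prime_root_of_unity_power_eq_1_iff[OF q \<omega>, of k] by (auto dest: dvd_imp_le)
      ultimately have "poly A x = 0"
        by (simp add: A_def poly_sum poly_monom geometric_sum)
      moreover have "poly B x = 0"
        unfolding B_def poly_prod using k by (intro prod_zero) auto
      ultimately show ?thesis by simp
    qed
  qed simp
  have "poly A 1 = of_nat q" by (simp add: A_def poly_sum poly_monom)
  moreover have "poly B 1 = (\<Prod>k\<in>{1..q-1}. 1 - \<omega> ^ k)" by (simp add: B_def poly_prod)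
  ultimately show ?thesis using \<open>A = B\<close> by simp
qed

section \<open>Integer polynomials vanishing at a primitive \<open>p\<close>-th root of unity\<close>

lemma map_poly_of_int_add:
  "map_poly (of_int :: int \<Rightarrow> 'a::comm_ring_1) (A + B) = map_poly of_int A + map_poly of_int B"
  by (intro poly_eqI) (simp add: coeff_map_poly)

lemma map_poly_of_int_diff:
  "map_poly (of_int :: int \<Rightarrow> 'a::comm_ring_1) (A - B) = map_poly of_int A - map_poly of_int B"
  by (intro poly_eqI) (simp add: coeff_map_poly)

lemma map_poly_of_int_uminus:
  "map_poly (of_int :: int \<Rightarrow> 'a::comm_ring_1) (- A) = - map_poly of_int A"
  by (intro poly_eqI) (simp add: coeff_map_poly)

lemma map_poly_of_int_mult:
  "map_poly (of_int :: int \<Rightarrow> 'a::comm_ring_1) (A * B) = map_poly of_int A * map_poly of_int B"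
  by (intro poly_eqI) (simp add: coeff_map_poly coeff_mult)

lemma map_poly_of_int_smult:
  "map_poly (of_int :: int \<Rightarrow> 'a::comm_ring_1) (smult c A) = smult (of_int c) (map_poly of_int A)"
  by (intro poly_eqI) (simp add: coeff_map_poly)

lemmas map_poly_of_int_simps =
  map_poly_of_int_add map_poly_of_int_diff map_poly_of_int_uminus map_poly_of_int_mult
  map_poly_of_int_smult

lemma eisenstein_degree_eq_0:
  fixes f g h :: "int poly" and P :: int
  assumes P: "prime P" and fgh: "f = g * h" and lc: "\<not> P dvd lead_coeff f"
    and low: "\<forall>i<degree f. P dvd coeff f i" and h0: "\<not> P dvd coeff h 0"
  shows "degree h = 0"
proof -
  have "g \<noteq> 0" "h \<noteq> 0" using lc fgh by auto
  have "\<not> P dvd lead_coeff g"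
    using lc fgh by (auto simp: lead_coeff_mult)
  define i where "i = (LEAST i. \<not> P dvd coeff g i)"
  have i: "\<not> P dvd coeff g i" "i \<le> degree g"
    unfolding i_def using \<open>\<not> P dvd lead_coeff g\<close> by (rule LeastI, rule Least_le)
  have below_i: "P dvd coeff g j" if "j < i" for j
    using that not_less_Least unfolding i_def by blast
  have "coeff f i = (\<Sum>j<i. coeff g j * coeff h (i - j)) + coeff g i * coeff h 0"
    by (simp add: fgh coeff_mult lessThan_Suc_atMost[symmetric])
  moreover have "P dvd (\<Sum>j<i. coeff g j * coeff h (i - j))"
    by (intro dvd_sum) (simp add: below_i)
  moreover have "\<not> P dvd coeff g i * coeff h 0"
    using P i(1) h0 by (simp add: prime_dvd_mult_iff)
  ultimately have "\<not> P dvd coeff f i"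
    by (metis dvd_add_right_iff)
  hence "degree f \<le> degree g"
    using low i(2) by (meson le_trans not_le)
  thus ?thesis
    using fgh \<open>g \<noteq> 0\<close> \<open>h \<noteq> 0\<close> by (simp add: degree_mult_eq)
qed

theorem eisenstein_criterion:
  fixes f g h :: "int poly" and P :: int
  assumes P: "prime P" and fgh: "f = g * h" and lc: "\<not> P dvd lead_coeff f"
    and low: "\<forall>i<degree f. P dvd coeff f i" and c0: "\<not> P\<^sup>2 dvd coeff f 0"
  shows "degree g = 0 \<or> degree h = 0"
proof (cases "degree f = 0")
  case True
  have "g \<noteq> 0" "h \<noteq> 0" using lc fgh by auto
  then show ?thesis using True fgh by (simp add: degree_mult_eq)
next
  case False
  hence "P dvd coeff f 0"
    using low by simp
  hence "P dvd coeff g 0 * coeff h 0"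
    by (simp add: fgh coeff_mult_0)
  moreover have "\<not> (P dvd coeff g 0 \<and> P dvd coeff h 0)"
    using c0 fgh by (auto simp: coeff_mult_0 power2_eq_square intro: mult_dvd_mono)
  ultimately show ?thesis
    using P eisenstein_degree_eq_0[OF P fgh lc low] eisenstein_degree_eq_0[OF P _ lc low, of h g] fgh
    by (auto simp: prime_dvd_mult_iff mult.commute)
qed

lemma pcompose_monom_1: "monom (1::'a::comm_ring_1) k \<circ>\<^sub>p r = r ^ k"
  by (induction k) (simp_all add: monom_Suc pcompose_pCons monom_0 pcompose_1)

lemma coeff_one_plus_X_power: "coeff ([:1, 1:] ^ n) k = (of_nat (n choose k) :: 'a::comm_semiring_1)"
proof (cases "k \<le> n")
  case False
  have "degree ([:1::'a, 1:] ^ n) \<le> n"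
    by (rule order.trans[OF degree_power_le]) simp
  thus ?thesis using False by (simp add: coeff_eq_0 binomial_eq_0)
qed (simp add: coeff_linear_poly_power)

definition geometric_poly :: "nat \<Rightarrow> int poly" where
  "geometric_poly p = (\<Sum>k<p. monom 1 k)"

lemma coeff_geometric_poly: "coeff (geometric_poly p) k = (if k < p then 1 else 0)"
  by (simp add: geometric_poly_def coeff_sum)

lemma degree_geometric_poly: "p > 0 \<Longrightarrow> degree (geometric_poly p) = p - 1"
  by (intro antisym degree_le le_degree) (auto simp: coeff_geometric_poly)

lemma content_geometric_poly: "p > 0 \<Longrightarrow> content (geometric_poly p) = 1"
  using content_dvd_coeff[of "geometric_poly p" 0]
  by (metis coeff_geometric_poly is_unit_normalize normalize_content)

lemma poly_geometric_poly_zeta: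
  assumes "p > 1" shows "poly (map_poly of_int (geometric_poly p)) (zeta p) = 0"
proof -
  have "map_poly of_int (geometric_poly p) = (\<Sum>k<p. monom (1::complex) k)"
    by (intro poly_eqI) (simp add: coeff_map_poly coeff_geometric_poly coeff_sum)
  hence "poly (map_poly of_int (geometric_poly p)) (zeta p) = (\<Sum>k<p. zeta p ^ k)"
    by (simp add: poly_sum poly_monom)
  also have "\<dots> = 0"
    using assms zeta_neq_1[OF assms] by (simp add: geometric_sum)
  finally show ?thesis .
qed

lemma coeff_geometric_poly_shift:
  assumes "p > 0"
  shows "coeff (geometric_poly p \<circ>\<^sub>p [:1, 1:]) k = int (p choose Suc k)"
proof -
  have "geometric_poly p \<circ>\<^sub>p [:1, 1:] = (\<Sum>j<p. [:1, 1:] ^ j)"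
    by (simp add: geometric_poly_def pcompose_sum pcompose_monom_1)
  hence "coeff (geometric_poly p \<circ>\<^sub>p [:1, 1:]) k = (\<Sum>j<p. int (j choose k))"
    by (simp add: coeff_sum coeff_one_plus_X_power)
  also have "\<dots> = int (\<Sum>j\<le>p - 1. j choose k)"
    using assms by (simp add: lessThan_Suc_atMost[symmetric])
  also have "\<dots> = int (p choose Suc k)"
    using assms by (simp add: sum_choose_upper)
  finally show ?thesis .
qed

lemma geometric_poly_factor_degree_eq_0:
  assumes p: "prime p" and GH: "geometric_poly p = G * H"
  shows "degree G = 0 \<or> degree H = 0"
proof -
  let ?L = "[:1, 1::int:]" and ?f = "geometric_poly p \<circ>\<^sub>p [:1, 1:]"
  have p1: "p > 1" using p prime_gt_1_nat by blast
  have deg: "degree ?f = p - 1"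
    using p1 by (simp add: degree_pcompose degree_geometric_poly)
  have "degree (G \<circ>\<^sub>p ?L) = 0 \<or> degree (H \<circ>\<^sub>p ?L) = 0"
  proof (rule eisenstein_criterion)
    show "prime (int p)" using p by simp
    show "?f = (G \<circ>\<^sub>p ?L) * (H \<circ>\<^sub>p ?L)"
      by (simp add: GH pcompose_mult)
    show "\<not> int p dvd lead_coeff ?f"
      using p1 by (simp add: deg coeff_geometric_poly_shift)
    show "\<forall>i<degree ?f. int p dvd coeff ?f i"
      using p p1 by (auto simp: deg coeff_geometric_poly_shift intro: dvd_choose_prime)
    have "\<not> int p * int p dvd int p * 1"
      using p1 by (subst dvd_mult_cancel_left) auto
    thus "\<not> (int p)\<^sup>2 dvd coeff ?f 0"
      using p1 by (simp del: coeff_pcompose_0 add: coeff_geometric_poly_shift power2_eq_square)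
  qed
  thus ?thesis by (simp add: degree_pcompose)
qed

lemma minimal_zeta_root_dvd_geometric_poly:
  assumes p: "p > 1" and G: "content G = 1" "poly (map_poly of_int G) (zeta p) = 0"
    and minimal: "\<And>R. R \<noteq> 0 \<Longrightarrow> poly (map_poly of_int R) (zeta p) = 0 \<Longrightarrow> degree G \<le> degree R"
  shows "G dvd geometric_poly p"
proof -
  have "G \<noteq> 0" using G(1) by auto
  obtain Q r where qr: "pseudo_divmod (geometric_poly p) G = (Q, r)"
    by (metis surj_pair)
  define c where "c = lead_coeff G ^ (Suc (degree (geometric_poly p)) - degree G)"
  have "c \<noteq> 0" using \<open>G \<noteq> 0\<close> by (simp add: c_def)
  have eq: "smult c (geometric_poly p) = G * Q + r"
    using pseudo_divmod(1)[OF \<open>G \<noteq> 0\<close> qr] by (simp add: c_def)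
  have "poly (map_poly of_int r) (zeta p) = 0"
    using arg_cong[OF eq, of "\<lambda>P. poly (map_poly of_int P) (zeta p)"] G(2) p
    by (simp add: map_poly_of_int_simps poly_geometric_poly_zeta)
  hence "r = 0"
    using pseudo_divmod(2)[OF \<open>G \<noteq> 0\<close> qr] minimal[of r] by force
  hence "primitive_part G dvd primitive_part (smult c (geometric_poly p))"
    using eq by auto
  hence "G dvd smult (unit_factor c) (geometric_poly p)"
    using p G(1) by (simp add: primitive_part_smult primitive_part_prim content_geometric_poly)
  hence "G dvd smult (unit_factor c) (smult (unit_factor c) (geometric_poly p))"
    by (rule dvd_smult)
  moreover have "unit_factor c * unit_factor c = 1"
    using \<open>c \<noteq> 0\<close> by (simp add: sgn_if)
  ultimately show ?thesis by simp
qed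

lemma degree_minimal_zeta_root:
  assumes p: "prime p" and G: "content G = 1" "poly (map_poly of_int G) (zeta p) = 0"
    and minimal: "\<And>R. R \<noteq> 0 \<Longrightarrow> poly (map_poly of_int R) (zeta p) = 0 \<Longrightarrow> degree G \<le> degree R"
  shows "degree G = p - 1"
proof -
  have p1: "p > 1" using p prime_gt_1_nat by blast
  have "G dvd geometric_poly p"
    by (rule minimal_zeta_root_dvd_geometric_poly[OF p1 G]) (rule minimal)
  then obtain H where GH: "geometric_poly p = G * H" by (elim dvdE)
  have "G \<noteq> 0" using G(1) by auto
  have "degree G \<noteq> 0"
  proof
    assume "degree G = 0"
    then obtain g where "G = [:g:]" by (elim degree_eq_zeroE)
    thus False using G(2) \<open>G \<noteq> 0\<close> by (auto simp: map_poly_pCons)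
  qed
  hence "degree H = 0" using geometric_poly_factor_degree_eq_0[OF p GH] by simp
  moreover have "H \<noteq> 0" using GH p1 content_geometric_poly[of p] by auto
  ultimately show ?thesis
    using GH \<open>G \<noteq> 0\<close> degree_geometric_poly[of p] p1 by (simp add: degree_mult_eq)
qed

theorem degree_ge_if_zeta_root:
  assumes p: "prime p" and R: "R \<noteq> 0" "poly (map_poly of_int R) (zeta p) = 0"
  shows "p - 1 \<le> degree R"
proof -
  define root where "root = (\<lambda>R :: int poly. R \<noteq> 0 \<and> poly (map_poly of_int R) (zeta p) = 0)"
  obtain R0 where R0: "root R0" and R0_min: "\<And>S. root S \<Longrightarrow> degree R0 \<le> degree S"
    using ex_has_least_nat[of root R degree] R by (auto simp: root_def)
  define G where "G = primitive_part R0"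
  have "R0 \<noteq> 0" using R0 by (simp add: root_def)
  have "poly (map_poly of_int R0) (zeta p) = of_int (content R0) * poly (map_poly of_int G) (zeta p)"
    by (metis G_def content_times_primitive_part map_poly_of_int_smult poly_smult)
  hence "poly (map_poly of_int G) (zeta p) = 0"
    using R0 by (auto simp: root_def)
  moreover have "degree G = degree R0" by (simp add: G_def degree_primitive_part)
  moreover have "content G = 1" using \<open>R0 \<noteq> 0\<close> by (simp add: G_def)
  ultimately have "degree R0 = p - 1"
    using degree_minimal_zeta_root[OF p] R0_min by (simp add: root_def)
  thus ?thesis using R0_min[of R] R by (simp add: root_def)
qed

section \<open>The ring \<open>\<int>[\<zeta>\<^sub>p]\<close> modulo \<open>q\<close>\<close>

lemma add_power_prime_eq:
  fixes x y :: "'a::comm_semiring_1"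
  assumes q: "prime q"
  shows "(x + y) ^ q = x ^ q + y ^ q
           + of_nat q * (\<Sum>k\<in>{1..q-1}. of_nat ((q choose k) div q) * x ^ k * y ^ (q - k))"
proof -
  have q1: "q > 1" using q prime_gt_1_nat by blast
  have split: "{..q} = insert 0 (insert q {1..q-1})" using q1 by auto
  have inner: "of_nat (q choose k) = (of_nat q * of_nat ((q choose k) div q) :: 'a)"
    if "k \<in> {1..q-1}" for k
  proof -
    have "q dvd q choose k" using that q q1 by (intro dvd_choose_prime) auto
    thus ?thesis by (simp flip: of_nat_mult)
  qed
  have "(x + y) ^ q = (\<Sum>k\<le>q. of_nat (q choose k) * x ^ k * y ^ (q - k))"
    by (rule binomial_ring)
  also have "\<dots> = x ^ q + y ^ q + (\<Sum>k\<in>{1..q-1}. of_nat (q choose k) * x ^ k * y ^ (q - k))"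
    using q1 by (subst split) (simp add: add_ac)
  also have "(\<Sum>k\<in>{1..q-1}. of_nat (q choose k) * x ^ k * y ^ (q - k))
      = of_nat q * (\<Sum>k\<in>{1..q-1}. of_nat ((q choose k) div q) * x ^ k * y ^ (q - k))"
    by (simp add: sum_distrib_left inner mult.assoc)
  finally show ?thesis .
qed

text \<open>\<open>HOL-Number_Theory.Residues\<close> has this as \<open>fermat_theorem\<close>, but importing it brings
  in \<open>HOL-Algebra\<close>, whose \<open>coeff\<close> and \<open>monom\<close> shadow the polynomial ones.\<close>

lemma fermat_little:
  fixes a p :: nat
  assumes p: "prime p" and a: "\<not> p dvd a"
  shows "a ^ (p - 1) mod p = 1"
proof -
  have p1: "p > 1" using p prime_gt_1_nat by blast
  have self: "int p dvd int b ^ p - int b" for b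
  proof (induction b)
    case (Suc b)
    define S :: int where "S = (\<Sum>k\<in>{1..p-1}. of_nat ((p choose k) div p) * 1 ^ k * int b ^ (p - k))"
    have E: "(1 + int b) ^ p = 1 + int b ^ p + int p * S"
      using add_power_prime_eq[OF p, of 1 "int b"] by (simp add: S_def)
    have "(1 + int b) ^ p - (1 + int b) = (int b ^ p - int b) + int p * S"
      unfolding E by simp
    moreover have "int p dvd (int b ^ p - int b) + int p * S"
      using Suc.IH by simp
    ultimately show "int p dvd int (Suc b) ^ p - int (Suc b)"
      by (simp only: of_nat_Suc)
  qed (use p1 in \<open>simp add: power_0_left\<close>)
  have "int a ^ p - int a = int a * (int a ^ (p - 1) - 1)"
    using p1 by (simp add: algebra_simps flip: power_Suc)
  hence "int p dvd int a * (int a ^ (p - 1) - 1)"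
    using self[of a] by simp
  moreover have "\<not> int p dvd int a" using a by simp
  ultimately have "int p dvd int a ^ (p - 1) - 1"
    using p by (simp add: prime_dvd_mult_iff)
  hence "int a ^ (p - 1) mod int p = 1 mod int p"
    by (simp add: mod_eq_dvd_iff)
  hence "int (a ^ (p - 1) mod p) = 1"
    using p1 by (simp add: zmod_int)
  thus ?thesis by simp
qed

lemma prime_power_mod_eq_1:
  assumes "prime p" "prime q" "p \<noteq> q"
  shows "q ^ ((p - 1) * m) mod p = 1"
proof -
  have "\<not> p dvd q" using assms primes_dvd_imp_eq by blast
  hence "q ^ ((p - 1) * m) mod p = (q ^ (p - 1) mod p) ^ m mod p"
    by (simp add: power_mult power_mod)
  also have "\<dots> = 1 mod p"
    using fermat_little[OF assms(1) \<open>\<not> p dvd q\<close>] by simp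
  finally show ?thesis using prime_gt_1_nat[OF assms(1)] by simp
qed

text \<open>Generating \<open>\<int>[\<zeta>\<^sub>p]\<close> from \<open>\<zeta>\<^sub>p\<close>, \<open>1\<close> and negation (rather than from all integers)
  spares the Frobenius congruence below a separate Fermat argument for integers.\<close>

inductive_set Zzeta :: "nat \<Rightarrow> complex set" for p where
  Zzeta_zeta: "zeta p \<in> Zzeta p"
| Zzeta_one: "1 \<in> Zzeta p"
| Zzeta_uminus: "x \<in> Zzeta p \<Longrightarrow> - x \<in> Zzeta p"
| Zzeta_add: "x \<in> Zzeta p \<Longrightarrow> y \<in> Zzeta p \<Longrightarrow> x + y \<in> Zzeta p"
| Zzeta_mult: "x \<in> Zzeta p \<Longrightarrow> y \<in> Zzeta p \<Longrightarrow> x * y \<in> Zzeta p"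

lemma Zzeta_zero: "0 \<in> Zzeta p"
  using Zzeta_add[OF Zzeta_one Zzeta_uminus[OF Zzeta_one]] by simp

lemma Zzeta_power: "x \<in> Zzeta p \<Longrightarrow> x ^ n \<in> Zzeta p"
  by (induction n) (auto intro: Zzeta_one Zzeta_mult)

lemma Zzeta_sum: "(\<And>i. i \<in> A \<Longrightarrow> f i \<in> Zzeta p) \<Longrightarrow> sum f A \<in> Zzeta p"
  by (induction A rule: infinite_finite_induct) (auto intro: Zzeta_zero Zzeta_add)

lemma Zzeta_of_nat: "of_nat n \<in> Zzeta p"
  by (induction n) (auto intro: Zzeta_zero Zzeta_one Zzeta_add)

lemma Zzeta_of_int: "of_int m \<in> Zzeta p"
  by (cases m rule: int_cases) (auto intro: Zzeta_of_nat Zzeta_uminus simp del: of_nat_Suc)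

lemma Zzeta_cnj:
  assumes "p > 0" "x \<in> Zzeta p" shows "cnj x \<in> Zzeta p"
  using assms(2)
proof (induction rule: Zzeta.induct)
  case Zzeta_zeta
  have "cnj (zeta p) = zeta p ^ (p - 1)"
    using cnj_root_of_unity_power[of "zeta p" p 1] assms(1) by simp
  thus ?case by (simp add: Zzeta_power Zzeta.Zzeta_zeta)
qed (auto intro: Zzeta.intros)

lemma Zzeta_imp_poly:
  "x \<in> Zzeta p \<Longrightarrow> \<exists>R. x = poly (map_poly of_int R) (zeta p)"
proof (induction rule: Zzeta.induct)
  case Zzeta_zeta show ?case by (rule exI[of _ "[:0, 1:]"]) (simp add: map_poly_pCons)
next
  case Zzeta_one show ?case by (rule exI[of _ 1]) simp
next
  case (Zzeta_uminus x)
  then obtain R where "x = poly (map_poly of_int R) (zeta p)" by blast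
  thus ?case by (intro exI[of _ "- R"]) (simp add: map_poly_of_int_simps)
next
  case (Zzeta_add x y)
  then obtain R S where "x = poly (map_poly of_int R) (zeta p)" "y = poly (map_poly of_int S) (zeta p)"
    by blast
  thus ?case by (intro exI[of _ "R + S"]) (simp add: map_poly_of_int_simps)
next
  case (Zzeta_mult x y)
  then obtain R S where "x = poly (map_poly of_int R) (zeta p)" "y = poly (map_poly of_int S) (zeta p)"
    by blast
  thus ?case by (intro exI[of _ "R * S"]) (simp add: map_poly_of_int_simps)
qed

lemma Zzeta_reduced_poly:
  assumes p: "p > 1" and x: "x \<in> Zzeta p"
  obtains R where "x = poly (map_poly of_int R) (zeta p)" "degree R < p - 1"
proof -
  obtain R where R: "x = poly (map_poly of_int R) (zeta p)"
    using Zzeta_imp_poly[OF x] by blast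
  have "geometric_poly p \<noteq> 0"
    using p content_geometric_poly[of p] by auto
  have "lead_coeff (geometric_poly p) = 1"
    using p by (simp add: degree_geometric_poly coeff_geometric_poly)
  then obtain Q r where qr: "pseudo_divmod R (geometric_poly p) = (Q, r)"
    by (metis surj_pair)
  have "R = geometric_poly p * Q + r"
    using pseudo_divmod(1)[OF \<open>geometric_poly p \<noteq> 0\<close> qr] \<open>lead_coeff _ = 1\<close> by simp
  hence "x = poly (map_poly of_int r) (zeta p)"
    using R p by (simp add: map_poly_of_int_simps poly_geometric_poly_zeta)
  moreover have "degree r < p - 1"
    using pseudo_divmod(2)[OF \<open>geometric_poly p \<noteq> 0\<close> qr] p by (auto simp: degree_geometric_poly)
  ultimately show ?thesis by (rule that)
qed

definition Zzeta_dvd :: "nat \<Rightarrow> complex \<Rightarrow> complex \<Rightarrow> bool" where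
  "Zzeta_dvd p d x \<longleftrightarrow> (\<exists>y\<in>Zzeta p. x = d * y)"

lemma Zzeta_dvd_triv: "y \<in> Zzeta p \<Longrightarrow> Zzeta_dvd p d (d * y)"
  unfolding Zzeta_dvd_def by blast

lemma Zzeta_dvd_0: "Zzeta_dvd p d 0"
  using Zzeta_dvd_triv[OF Zzeta_zero] by simp

lemma Zzeta_dvd_add: "Zzeta_dvd p d x \<Longrightarrow> Zzeta_dvd p d y \<Longrightarrow> Zzeta_dvd p d (x + y)"
  unfolding Zzeta_dvd_def by (auto intro!: bexI[OF _ Zzeta_add] simp: distrib_left)

lemma Zzeta_dvd_uminus: "Zzeta_dvd p d x \<Longrightarrow> Zzeta_dvd p d (- x)"
  unfolding Zzeta_dvd_def by (auto intro!: bexI[OF _ Zzeta_uminus])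

lemma Zzeta_dvd_diff: "Zzeta_dvd p d x \<Longrightarrow> Zzeta_dvd p d y \<Longrightarrow> Zzeta_dvd p d (x - y)"
  unfolding diff_conv_add_uminus by (intro Zzeta_dvd_add Zzeta_dvd_uminus)

lemma Zzeta_dvd_mult_right: "Zzeta_dvd p d x \<Longrightarrow> y \<in> Zzeta p \<Longrightarrow> Zzeta_dvd p d (x * y)"
  unfolding Zzeta_dvd_def by (auto intro!: bexI[OF _ Zzeta_mult] simp: mult.assoc)

lemma Zzeta_dvd_mult_left: "Zzeta_dvd p d x \<Longrightarrow> y \<in> Zzeta p \<Longrightarrow> Zzeta_dvd p d (y * x)"
  by (subst mult.commute) (rule Zzeta_dvd_mult_right)

lemma Zzeta_dvd_prod:
  assumes "finite A" "\<And>i. i \<in> A \<Longrightarrow> Zzeta_dvd p d (f i)"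
  shows "Zzeta_dvd p (d ^ card A) (prod f A)"
  using assms
proof (induction A rule: finite_induct)
  case empty show ?case using Zzeta_dvd_triv[OF Zzeta_one] by simp
next
  case (insert i A)
  obtain a where a: "a \<in> Zzeta p" "f i = d * a"
    using insert.prems[of i] unfolding Zzeta_dvd_def by blast
  obtain b where b: "b \<in> Zzeta p" "prod f A = d ^ card A * b"
    using insert unfolding Zzeta_dvd_def by blast
  have "prod f (insert i A) = d ^ card (insert i A) * (a * b)"
    using insert.hyps by (simp add: a b mult_ac)
  thus ?case using Zzeta_dvd_triv[OF Zzeta_mult[OF a(1) b(1)]] by simp
qed

lemma Zzeta_dvd_power_diff:
  assumes "x \<in> Zzeta p" "y \<in> Zzeta p" "Zzeta_dvd p d (x - y)"
  shows "Zzeta_dvd p d (x ^ n - y ^ n)"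
proof -
  have "x ^ n - y ^ n = (x - y) * (\<Sum>i<n. y ^ (n - Suc i) * x ^ i)"
    by (rule power_diff_sumr2)
  thus ?thesis
    using assms by (auto intro!: Zzeta_dvd_mult_right Zzeta_sum Zzeta_mult Zzeta_power)
qed

lemma Zzeta_dvd_add_power_prime:
  assumes "prime q" "x \<in> Zzeta p" "y \<in> Zzeta p"
  shows "Zzeta_dvd p (of_nat q) ((x + y) ^ q - x ^ q - y ^ q)"
proof -
  have "(x + y) ^ q - x ^ q - y ^ q
      = of_nat q * (\<Sum>k\<in>{1..q-1}. of_nat ((q choose k) div q) * x ^ k * y ^ (q - k))"
    using add_power_prime_eq[OF assms(1), of x y] by simp
  thus ?thesis
    using assms(2,3) by (auto intro!: Zzeta_dvd_triv Zzeta_sum Zzeta_mult Zzeta_power Zzeta_of_nat)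
qed

lemma Zzeta_dvd_add_power_prime_power:
  assumes q: "prime q" and xy: "x \<in> Zzeta p" "y \<in> Zzeta p"
  shows "Zzeta_dvd p (of_nat q) ((x + y) ^ q ^ N - x ^ q ^ N - y ^ q ^ N)"
proof (induction N)
  case 0 show ?case by (simp add: Zzeta_dvd_0)
next
  case (Suc N)
  define a b where "a = (x + y) ^ q ^ N" and "b = x ^ q ^ N + y ^ q ^ N"
  have ab: "a \<in> Zzeta p" "b \<in> Zzeta p"
    using xy by (auto simp: a_def b_def intro: Zzeta_power Zzeta_add)
  have "Zzeta_dvd p (of_nat q) (a ^ q - b ^ q)"
    using Suc.IH by (intro Zzeta_dvd_power_diff[OF ab]) (simp add: a_def b_def diff_diff_eq)
  moreover have "Zzeta_dvd p (of_nat q) (b ^ q - (x ^ q ^ N) ^ q - (y ^ q ^ N) ^ q)"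
    unfolding b_def using xy by (intro Zzeta_dvd_add_power_prime[OF q] Zzeta_power)
  moreover have "(x + y) ^ q ^ Suc N - x ^ q ^ Suc N - y ^ q ^ Suc N
      = (a ^ q - b ^ q) + (b ^ q - (x ^ q ^ N) ^ q - (y ^ q ^ N) ^ q)"
    unfolding a_def power_Suc2 power_mult by simp
  ultimately show ?case by (metis Zzeta_dvd_add)
qed

text \<open>By the freshman's dream, \<open>x \<mapsto> x\<^bsup>q\<^sup>N\<^esup>\<close> is a ring endomorphism of \<open>\<int>[\<zeta>\<^sub>p]/q\<close>;
  it fixes the generator \<open>\<zeta>\<^sub>p\<close> as soon as \<open>q\<^sup>N \<equiv> 1 (mod p)\<close>.\<close>

lemma Zzeta_frobenius:
  assumes q: "prime q" "odd q" and p: "p > 0" and N: "q ^ N mod p = 1" and x: "x \<in> Zzeta p"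
  shows "Zzeta_dvd p (of_nat q) (x ^ q ^ N - x)"
  using x
proof (induction rule: Zzeta.induct)
  case Zzeta_zeta
  have "zeta p ^ q ^ N = zeta p"
    using zeta_power_mod[OF p, of "q ^ N"] N by simp
  thus ?case by (simp add: Zzeta_dvd_0)
next
  case Zzeta_one
  show ?case by (simp add: Zzeta_dvd_0)
next
  case (Zzeta_uminus x)
  have "(- x) ^ q ^ N - (- x) = - (x ^ q ^ N - x)"
    using q(2) by (simp add: power_minus_odd)
  thus ?case using Zzeta_uminus.IH by (metis Zzeta_dvd_uminus)
next
  case (Zzeta_add x y)
  have "(x + y) ^ q ^ N - (x + y)
      = ((x + y) ^ q ^ N - x ^ q ^ N - y ^ q ^ N) + (x ^ q ^ N - x) + (y ^ q ^ N - y)"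
    by simp
  thus ?case
    using Zzeta_dvd_add_power_prime_power[OF q(1) Zzeta_add.hyps] Zzeta_add.IH
    by (metis Zzeta_dvd_add)
next
  case (Zzeta_mult x y)
  have "(x * y) ^ q ^ N - x * y = (x ^ q ^ N - x) * y ^ q ^ N + x * (y ^ q ^ N - y)"
    by (simp add: power_mult_distrib algebra_simps)
  thus ?case
    using Zzeta_mult by (metis Zzeta_dvd_add Zzeta_dvd_mult_left Zzeta_dvd_mult_right Zzeta_power)
qed

lemma Zzeta_dvd_of_dvd_power:
  assumes p: "prime p" and q: "prime q" "odd q" and pq: "p \<noteq> q"
    and x: "x \<in> Zzeta p" and dvd: "Zzeta_dvd p (of_nat q) (x ^ n)"
  shows "Zzeta_dvd p (of_nat q) x"
proof -
  define M where "M = (p - 1) * n"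
  have "1 * n \<le> M"
    unfolding M_def using prime_gt_1_nat[OF p] by (intro mult_le_mono1) simp
  hence "n \<le> M" by simp
  also have "M < 2 ^ M" by (rule less_exp)
  also have "2 ^ M \<le> q ^ M" using prime_ge_2_nat[OF q(1)] by (rule power_mono) simp
  finally have "x ^ q ^ M = x ^ n * x ^ (q ^ M - n)"
    by (simp flip: power_add)
  hence "Zzeta_dvd p (of_nat q) (x ^ q ^ M)"
    using Zzeta_dvd_mult_right[OF dvd Zzeta_power[OF x]] by simp
  moreover have "q ^ M mod p = 1"
    unfolding M_def by (rule prime_power_mod_eq_1[OF p q(1) pq])
  hence "Zzeta_dvd p (of_nat q) (x ^ q ^ M - x)"
    by (rule Zzeta_frobenius[OF q prime_gt_0_nat[OF p] _ x])
  ultimately show ?thesis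
    using Zzeta_dvd_diff by fastforce
qed

lemma Zzeta_dvd_diff_if_frobenius_eq:
  assumes p: "prime p" and q: "prime q" "odd q" and pq: "p \<noteq> q"
    and xy: "x \<in> Zzeta p" "y \<in> Zzeta p" "x ^ q ^ (p - 1) = y ^ q ^ (p - 1)"
  shows "Zzeta_dvd p (of_nat q) (x - y)"
proof -
  have "q ^ (p - 1) mod p = 1"
    using prime_power_mod_eq_1[OF p q(1) pq, of 1] by simp
  hence "Zzeta_dvd p (of_nat q) (z ^ q ^ (p - 1) - z)" if "z \<in> Zzeta p" for z
    by (rule Zzeta_frobenius[OF q prime_gt_0_nat[OF p] _ that])
  moreover have "x - y = (y ^ q ^ (p - 1) - y) - (x ^ q ^ (p - 1) - x)"
    using xy(3) by simp
  ultimately show ?thesis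
    using xy(1,2) by (metis Zzeta_dvd_diff)
qed

text \<open>The factors of \<open>\<Prod>\<^sub>k (V - \<omega>\<^sup>k V) = q V\<^sup>q\<^sup>-\<^sup>1\<close> are all divisible by \<open>q\<close>, because
  Frobenius cannot separate \<open>V\<close> from \<open>\<omega>\<^sup>k V\<close>; as \<open>q - 1 \<ge> 2\<close>, this leaves a factor \<open>q\<close>
  in \<open>V\<^sup>q\<^sup>-\<^sup>1\<close>.\<close>

lemma Zzeta_dvd_if_root_of_unity_multiples:
  assumes p: "prime p" and q: "prime q" "odd q" and pq: "p \<noteq> q"
    and \<omega>: "\<omega> ^ q = 1" "\<omega> \<noteq> 1"
    and V: "V \<in> Zzeta p" "\<And>k. k \<in> {1..q-1} \<Longrightarrow> \<omega> ^ k * V \<in> Zzeta p"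
  shows "Zzeta_dvd p (of_nat q) V"
proof -
  have q3: "q \<ge> 3"
    using prime_ge_2_nat[OF q(1)] q(2) by (cases "q = 2") auto
  have "q dvd q ^ (p - 1)"
    using prime_gt_1_nat[OF p] by simp
  hence \<omega>Q: "\<omega> ^ q ^ (p - 1) = 1"
    using prime_root_of_unity_power_eq_1_iff[OF q(1) \<omega>] by simp
  have factor: "Zzeta_dvd p (of_nat q) (V - \<omega> ^ k * V)" if "k \<in> {1..q-1}" for k
  proof (rule Zzeta_dvd_diff_if_frobenius_eq[OF p q pq V(1) V(2)[OF that]])
    have "(\<omega> ^ k) ^ q ^ (p - 1) = (\<omega> ^ q ^ (p - 1)) ^ k"
      by (simp only: power_mult[symmetric] mult.commute)
    thus "V ^ q ^ (p - 1) = (\<omega> ^ k * V) ^ q ^ (p - 1)"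
      using \<omega>Q by (simp add: power_mult_distrib)
  qed
  have "(\<Prod>k\<in>{1..q-1}. V - \<omega> ^ k * V) = (\<Prod>k\<in>{1..q-1}. V * (1 - \<omega> ^ k))"
    by (simp add: algebra_simps)
  also have "\<dots> = V ^ (q - 1) * (\<Prod>k\<in>{1..q-1}. 1 - \<omega> ^ k)"
    by (simp add: prod.distrib)
  also have "\<dots> = V ^ (q - 1) * of_nat q"
    using prod_one_minus_prime_root_of_unity[OF q(1) \<omega>] by simp
  finally have prod_eq: "(\<Prod>k\<in>{1..q-1}. V - \<omega> ^ k * V) = V ^ (q - 1) * of_nat q" .
  have "Zzeta_dvd p (of_nat q ^ card {1..q-1}) (\<Prod>k\<in>{1..q-1}. V - \<omega> ^ k * V)"
    by (rule Zzeta_dvd_prod) (simp_all add: factor)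
  then obtain w where "w \<in> Zzeta p" and w: "V ^ (q - 1) * of_nat q = of_nat q ^ (q - 1) * w"
    unfolding prod_eq Zzeta_dvd_def by auto
  have "of_nat q ^ (q - 1) = (of_nat q :: complex) * (of_nat q * of_nat q ^ (q - 3))"
    using q3 by (simp flip: power_Suc) (simp add: Suc_diff_Suc numeral_3_eq_3)
  hence "V ^ (q - 1) = of_nat q * (of_nat q ^ (q - 3) * w)"
    using w prime_gt_0_nat[OF q(1)] by (simp add: mult.commute)
  hence "Zzeta_dvd p (of_nat q) (V ^ (q - 1))"
    using \<open>w \<in> Zzeta p\<close> by (simp add: Zzeta_dvd_triv Zzeta_mult Zzeta_power Zzeta_of_nat)
  thus ?thesis
    by (rule Zzeta_dvd_of_dvd_power[OF p q pq V(1)])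
qed

lemma Zzeta_dvd_if_power_prime_eq:
  assumes p: "prime p" and q: "prime q" "odd q" and pq: "p \<noteq> q"
    and uv: "u \<in> Zzeta p" "v \<in> Zzeta p" "v \<noteq> 0" "u ^ q = v ^ q" "u \<noteq> v"
  shows "Zzeta_dvd p (of_nat q) u \<and> Zzeta_dvd p (of_nat q) v"
proof -
  define \<omega> where "\<omega> = u / v"
  have u: "u = \<omega> * v" using uv(3) by (simp add: \<omega>_def)
  have \<omega>: "\<omega> ^ q = 1" "\<omega> \<noteq> 1" using uv(3-5) by (auto simp: \<omega>_def power_divide)
  have "\<omega> ^ k * v ^ (q - 1) \<in> Zzeta p" if "k \<in> {1..q-1}" for k
  proof -
    have "k + (q - 1 - k) = q - 1"
      using that by auto
    hence "u ^ k * v ^ (q - 1 - k) = \<omega> ^ k * v ^ (q - 1)"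
      by (simp add: u power_mult_distrib mult.assoc flip: power_add)
    thus ?thesis
      using uv(1,2) by (metis Zzeta_mult Zzeta_power)
  qed
  hence "Zzeta_dvd p (of_nat q) (v ^ (q - 1))"
    using Zzeta_dvd_if_root_of_unity_multiples[OF p q pq \<omega>] uv(2) by (simp add: Zzeta_power)
  hence v: "Zzeta_dvd p (of_nat q) v"
    by (rule Zzeta_dvd_of_dvd_power[OF p q pq uv(2)])
  have "\<omega> ^ q ^ (p - 1) = 1"
    using \<omega> prime_root_of_unity_power_eq_1_iff[OF q(1) \<omega>] prime_gt_1_nat[OF p] by simp
  hence "Zzeta_dvd p (of_nat q) (u - v)"
    using uv(1,2) by (intro Zzeta_dvd_diff_if_frobenius_eq[OF p q pq]) (simp_all add: u power_mult_distrib)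
  hence "Zzeta_dvd p (of_nat q) u"
    using v Zzeta_dvd_add by fastforce
  with v show ?thesis by blast
qed

lemma Zzeta_not_dvd_all_powers:
  assumes p: "prime p" and q: "q > 1" and x: "x \<in> Zzeta p" "x \<noteq> 0"
  obtains j where "\<not> Zzeta_dvd p (of_nat q ^ j) x"
proof -
  have p1: "p > 1" using p prime_gt_1_nat by blast
  obtain R where R: "x = poly (map_poly of_int R) (zeta p)" "degree R < p - 1"
    using Zzeta_reduced_poly[OF p1 x(1)] by blast
  have "R \<noteq> 0" using R(1) x(2) by auto
  define c where "c = lead_coeff R"
  have "c \<noteq> 0" using \<open>R \<noteq> 0\<close> by (simp add: c_def)
  define j where "j = nat \<bar>c\<bar>"
  have "j < 2 ^ j" by (rule less_exp)
  also have "\<dots> \<le> q ^ j" using q by (intro power_mono) simp_all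
  finally have j: "int j < int q ^ j" by (simp flip: of_nat_power)
  show ?thesis
  proof (rule that[of j], rule notI)
    assume "Zzeta_dvd p (of_nat q ^ j) x"
    then obtain w where w: "w \<in> Zzeta p" "x = of_nat q ^ j * w"
      unfolding Zzeta_dvd_def by blast
    obtain S where S: "w = poly (map_poly of_int S) (zeta p)" "degree S < p - 1"
      using Zzeta_reduced_poly[OF p1 w(1)] by blast
    define D where "D = R - smult (int q ^ j) S"
    have "poly (map_poly of_int D) (zeta p) = 0"
      using w(2) by (simp add: D_def map_poly_of_int_simps R(1) S(1))
    moreover have "degree D < p - 1"
      unfolding D_def using R(2) S(2) degree_smult_le le_less_trans
      by (intro degree_diff_less) blast+
    ultimately have "D = 0"
      using degree_ge_if_zeta_root[OF p] by (meson not_le)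
    hence "c = int q ^ j * coeff S (degree R)"
      by (simp add: D_def c_def)
    hence "\<bar>int q ^ j\<bar> \<le> \<bar>c\<bar>"
      using \<open>c \<noteq> 0\<close> by (intro dvd_imp_le_int) auto
    thus False using j by (simp add: j_def)
  qed
qed

theorem Zzeta_power_prime_eq_imp_eq:
  assumes p: "prime p" and q: "prime q" "odd q" and pq: "p \<noteq> q"
    and uv: "u \<in> Zzeta p" "v \<in> Zzeta p" "v \<noteq> 0" "u ^ q = v ^ q"
  shows "u = v"
proof (rule ccontr)
  assume "u \<noteq> v"
  have q0: "(of_nat q :: complex) \<noteq> 0" using prime_gt_0_nat[OF q(1)] by simp
  have "Zzeta_dvd p (of_nat q ^ j) v" for j
    using uv \<open>u \<noteq> v\<close>
  proof (induction j arbitrary: u v)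
    case 0
    show ?case using Zzeta_dvd_triv[OF \<open>v \<in> Zzeta p\<close>, of 1] by simp
  next
    case (Suc j)
    obtain u' v' where u': "u' \<in> Zzeta p" "u = of_nat q * u'" and v': "v' \<in> Zzeta p" "v = of_nat q * v'"
      using Zzeta_dvd_if_power_prime_eq[OF p q pq Suc.prems] unfolding Zzeta_dvd_def by blast
    have "of_nat q ^ q * u' ^ q = of_nat q ^ q * v' ^ q"
      using Suc.prems(4) by (simp add: u'(2) v'(2) power_mult_distrib)
    hence "u' ^ q = v' ^ q" using q0 by simp
    moreover have "v' \<noteq> 0" "u' \<noteq> v'" using Suc.prems(3,5) u' v' by auto
    ultimately obtain w where w: "w \<in> Zzeta p" "v' = of_nat q ^ j * w"
      using Suc.IH[OF u'(1) v'(1)] unfolding Zzeta_dvd_def by blast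
    have "v = of_nat q ^ Suc j * w"
      using v'(2) w(2) by simp
    thus ?case using w(1) by (simp add: Zzeta_dvd_triv)
  qed
  moreover obtain j where "\<not> Zzeta_dvd p (of_nat q ^ j) v"
    using Zzeta_not_dvd_all_powers[OF p prime_gt_1_nat[OF q(1)] uv(2,3)] .
  ultimately show False by blast
qed

section \<open>Subrings and ring homomorphisms on them\<close>

locale subring =
  fixes S :: "'a::comm_ring_1 set"
  assumes one_closed: "1 \<in> S"
    and uminus_closed: "x \<in> S \<Longrightarrow> - x \<in> S"
    and add_closed: "x \<in> S \<Longrightarrow> y \<in> S \<Longrightarrow> x + y \<in> S"
    and mult_closed: "x \<in> S \<Longrightarrow> y \<in> S \<Longrightarrow> x * y \<in> S"
begin

lemma zero_closed: "0 \<in> S"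
  using add_closed[OF one_closed uminus_closed[OF one_closed]] by simp

lemma diff_closed: "x \<in> S \<Longrightarrow> y \<in> S \<Longrightarrow> x - y \<in> S"
  unfolding diff_conv_add_uminus by (intro add_closed uminus_closed)

lemma power_closed: "x \<in> S \<Longrightarrow> x ^ n \<in> S"
  by (induction n) (simp_all add: one_closed mult_closed)

lemma sum_closed: "(\<And>i. i \<in> A \<Longrightarrow> f i \<in> S) \<Longrightarrow> sum f A \<in> S"
  by (induction A rule: infinite_finite_induct) (simp_all add: zero_closed add_closed)

lemma prod_closed: "(\<And>i. i \<in> A \<Longrightarrow> f i \<in> S) \<Longrightarrow> prod f A \<in> S"
  by (induction A rule: infinite_finite_induct) (simp_all add: one_closed mult_closed)

lemma of_nat_closed: "of_nat n \<in> S"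
  by (induction n) (simp_all add: zero_closed one_closed add_closed)

lemma of_int_closed: "of_int m \<in> S"
  by (cases m rule: int_cases) (simp_all add: of_nat_closed uminus_closed del: of_nat_Suc)

lemma fps_nth_prod_closed:
  "(\<And>a k. a \<in> A \<Longrightarrow> fps_nth (F a) k \<in> S) \<Longrightarrow> fps_nth (\<Prod>a\<in>A. F a) k \<in> S"
proof (induction A arbitrary: k rule: infinite_finite_induct)
  case (insert a A)
  thus ?case
    by (simp add: fps_mult_nth sum_closed mult_closed)
qed (simp_all add: one_closed zero_closed)

end

locale subring_hom = subring S for S :: "'a::comm_ring_1 set" +
  fixes h :: "'a \<Rightarrow> 'b::comm_ring_1"
  assumes hom_one: "h 1 = 1"
    and hom_add: "x \<in> S \<Longrightarrow> y \<in> S \<Longrightarrow> h (x + y) = h x + h y"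
    and hom_mult: "x \<in> S \<Longrightarrow> y \<in> S \<Longrightarrow> h (x * y) = h x * h y"
begin

lemma hom_zero: "h 0 = 0"
  using hom_add[OF zero_closed zero_closed] by simp

lemma hom_uminus:
  assumes "x \<in> S" shows "h (- x) = - h x"
proof -
  have "h x + h (- x) = 0"
    using hom_add[OF assms uminus_closed[OF assms]] hom_zero by simp
  thus ?thesis using minus_unique by metis
qed

lemma hom_diff:
  assumes "x \<in> S" "y \<in> S" shows "h (x - y) = h x - h y"
  using hom_add[OF assms(1) uminus_closed[OF assms(2)]] hom_uminus[OF assms(2)] by simp

lemma hom_power: "x \<in> S \<Longrightarrow> h (x ^ n) = h x ^ n"
  by (induction n) (simp_all add: hom_one hom_mult power_closed)

lemma hom_sum: "(\<And>i. i \<in> A \<Longrightarrow> f i \<in> S) \<Longrightarrow> h (sum f A) = (\<Sum>i\<in>A. h (f i))"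
  by (induction A rule: infinite_finite_induct) (simp_all add: hom_zero hom_add sum_closed)

lemma hom_prod: "(\<And>i. i \<in> A \<Longrightarrow> f i \<in> S) \<Longrightarrow> h (prod f A) = (\<Prod>i\<in>A. h (f i))"
  by (induction A rule: infinite_finite_induct) (simp_all add: hom_one hom_mult prod_closed)

lemma hom_of_nat: "h (of_nat n) = of_nat n"
  by (induction n) (simp_all add: hom_zero hom_add hom_one one_closed of_nat_closed)

lemma hom_of_int: "h (of_int m) = of_int m"
  by (cases m rule: int_cases)
    (simp_all add: hom_of_nat hom_uminus of_nat_closed del: of_nat_Suc)

definition fps_map :: "'a fps \<Rightarrow> 'b fps" where
  "fps_map F = Abs_fps (\<lambda>k. h (fps_nth F k))"

lemma fps_map_nth [simp]: "fps_nth (fps_map F) k = h (fps_nth F k)"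
  by (simp add: fps_map_def)

lemma fps_map_prod:
  "(\<And>a k. a \<in> A \<Longrightarrow> fps_nth (F a) k \<in> S) \<Longrightarrow> fps_map (\<Prod>a\<in>A. F a) = (\<Prod>a\<in>A. fps_map (F a))"
proof (induction A rule: infinite_finite_induct)
  case (insert a A)
  have "h (fps_nth (F a * (\<Prod>a\<in>A. F a)) k) = fps_nth (fps_map (F a) * (\<Prod>a\<in>A. fps_map (F a))) k" for k
    using insert by (simp add: fps_mult_nth hom_sum hom_mult mult_closed fps_nth_prod_closed
                          flip: fps_map_nth)
  thus ?case using insert.hyps by (simp add: fps_eq_iff)
qed (simp_all add: fps_eq_iff hom_one hom_zero fps_one_nth)

end

lemma subring_hom_of_rat:
  fixes h :: "'a::field_char_0 \<Rightarrow> 'b::field_char_0"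
  assumes "subring_hom S h" "\<And>r. of_rat r \<in> S"
  shows "h (of_rat r) = of_rat r"
proof -
  interpret subring_hom S h by fact
  obtain a b where ab: "quotient_of r = (a, b)" by (metis surj_pair)
  have "b > 0" using quotient_of_denom_pos[OF ab] .
  have r: "r = of_int a / of_int b" using quotient_of_div[OF ab] .
  have "of_int b * of_rat r = (of_int a :: 'a)"
    using \<open>b > 0\<close> by (simp add: r of_rat_divide)
  hence "of_int b * h (of_rat r) = of_int a"
    using hom_mult[OF of_int_closed assms(2)] by (metis hom_of_int)
  thus ?thesis
    using \<open>b > 0\<close> by (simp add: r of_rat_divide field_simps)
qed

lemma power_int_mult_power_nat_neg:
  fixes w :: "'a::field"
  assumes "w \<noteq> 0"
  shows "w powi k * w ^ nat (- k) = w ^ nat k"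
  using assms by (cases "k \<ge> 0") (simp_all add: power_int_def field_simps)

lemma prod_power_int_mult_prod_power_nat_neg:
  fixes v :: "'b \<Rightarrow> 'a::field"
  assumes "\<And>a. a \<in> A \<Longrightarrow> v a \<noteq> 0"
  shows "(\<Prod>a\<in>A. v a powi n a) * (\<Prod>a\<in>A. v a ^ nat (- n a)) = (\<Prod>a\<in>A. v a ^ nat (n a))"
  using assms by (simp add: power_int_mult_power_nat_neg flip: prod.distrib)

lemma subring_hom_prod_power_int:
  fixes h :: "'a::field \<Rightarrow> 'b::field"
  assumes "subring_hom S h" and w: "\<And>a. a \<in> A \<Longrightarrow> w a \<in> S \<and> w a \<noteq> 0 \<and> h (w a) \<noteq> 0"
    and y: "y \<in> S" "y = (\<Prod>a\<in>A. w a powi n a)"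
  shows "h y = (\<Prod>a\<in>A. h (w a) powi n a)"
proof -
  interpret subring_hom S h by fact
  have "h y * (\<Prod>a\<in>A. h (w a) ^ nat (- n a)) = h (y * (\<Prod>a\<in>A. w a ^ nat (- n a)))"
    using w y(1) by (simp add: hom_mult hom_prod hom_power prod_closed power_closed)
  also have "\<dots> = (\<Prod>a\<in>A. h (w a) ^ nat (n a))"
    using w by (simp add: y(2) prod_power_int_mult_prod_power_nat_neg hom_prod hom_power power_closed)
  also have "\<dots> = (\<Prod>a\<in>A. h (w a) powi n a) * (\<Prod>a\<in>A. h (w a) ^ nat (- n a))"
    using w by (simp add: prod_power_int_mult_prod_power_nat_neg)
  moreover have "(\<Prod>a\<in>A. h (w a) ^ nat (- n a)) \<noteq> 0"
    using w by (cases "finite A") simp_all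
  ultimately show ?thesis by simp
qed

section \<open>The fields \<open>\<rat>(\<zeta>\<^sub>p)\<close> and \<open>\<rat>(\<zeta>\<^sub>p\<^sup>+)\<close>\<close>

lemma Qzeta_of_rat_mult:
  assumes "x \<in> Qzeta p" shows "of_rat r * x \<in> Qzeta p"
proof -
  obtain c where "x = (\<Sum>k<p. of_rat (c k) * zeta p ^ k)"
    using assms unfolding Qzeta_def by blast
  thus ?thesis unfolding Qzeta_def
    by (intro CollectI exI[of _ "\<lambda>k. r * c k"]) (simp add: of_rat_mult sum_distrib_left mult_ac)
qed

lemma Qzeta_add:
  assumes "x \<in> Qzeta p" "y \<in> Qzeta p" shows "x + y \<in> Qzeta p"
proof -
  obtain c d where "x = (\<Sum>k<p. of_rat (c k) * zeta p ^ k)" "y = (\<Sum>k<p. of_rat (d k) * zeta p ^ k)"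
    using assms unfolding Qzeta_def by blast
  thus ?thesis unfolding Qzeta_def
    by (intro CollectI exI[of _ "\<lambda>k. c k + d k"]) (simp add: of_rat_add distrib_right sum.distrib)
qed

lemma Qzeta_sum: "(\<And>i. i \<in> A \<Longrightarrow> f i \<in> Qzeta p) \<Longrightarrow> sum f A \<in> Qzeta p"
proof (induction A rule: infinite_finite_induct)
  case (infinite A)
  show ?case unfolding Qzeta_def using infinite by (auto intro!: exI[of _ "\<lambda>_. 0"])
next
  case empty
  show ?case unfolding Qzeta_def by (auto intro!: exI[of _ "\<lambda>_. 0"])
qed (simp add: Qzeta_add)

lemma Qzeta_zeta_power:
  assumes "p > 0" shows "zeta p ^ m \<in> Qzeta p"
proof -
  have "(\<Sum>k<p. of_rat (if k = m mod p then 1 else 0) * zeta p ^ k)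
      = (\<Sum>k<p. if k = m mod p then zeta p ^ k else 0)"
    by (rule sum.cong) auto
  also have "\<dots> = zeta p ^ m"
    using assms by (simp add: zeta_power_mod)
  finally show ?thesis unfolding Qzeta_def by (intro CollectI exI) (rule sym)
qed

lemma Qzeta_mult:
  assumes "p > 0" "x \<in> Qzeta p" "y \<in> Qzeta p" shows "x * y \<in> Qzeta p"
proof -
  obtain c d where "x = (\<Sum>k<p. of_rat (c k) * zeta p ^ k)" "y = (\<Sum>k<p. of_rat (d k) * zeta p ^ k)"
    using assms(2,3) unfolding Qzeta_def by blast
  hence "x * y = (\<Sum>k<p. \<Sum>j<p. of_rat (c k * d j) * zeta p ^ (k + j))"
    by (simp add: sum_product of_rat_mult power_add mult_ac)
  also have "\<dots> \<in> Qzeta p"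
    using assms(1) by (intro Qzeta_sum Qzeta_of_rat_mult Qzeta_zeta_power)
  finally show ?thesis .
qed

lemma subring_Qzeta: "p > 0 \<Longrightarrow> subring (Qzeta p)"
  using Qzeta_zeta_power[of p 0] Qzeta_of_rat_mult[of _ p "-1"]
  by unfold_locales (simp_all add: Qzeta_add Qzeta_mult)

lemma Qzeta_of_rat: "p > 0 \<Longrightarrow> of_rat r \<in> Qzeta p"
  using Qzeta_of_rat_mult[OF Qzeta_zeta_power[of p 0]] by simp

lemma gal_subring_hom:
  assumes "\<sigma> \<in> gal p" "p > 0" shows "subring_hom (Qzeta p) \<sigma>"
proof -
  interpret subring "Qzeta p" using subring_Qzeta[OF assms(2)] .
  show ?thesis using assms(1) by unfold_locales (simp_all add: gal_def)
qed

lemma gal_of_rat: "\<sigma> \<in> gal p \<Longrightarrow> p > 0 \<Longrightarrow> \<sigma> (of_rat r) = of_rat r"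
  by (intro subring_hom_of_rat[OF gal_subring_hom] Qzeta_of_rat)

lemma gal_closed: "\<sigma> \<in> gal p \<Longrightarrow> x \<in> Qzeta p \<Longrightarrow> \<sigma> x \<in> Qzeta p"
  unfolding gal_def using bij_betwE by blast

lemma gal_zeta_power_p:
  assumes "\<sigma> \<in> gal p" "p > 0" shows "\<sigma> (zeta p) ^ p = 1"
proof -
  interpret subring_hom "Qzeta p" \<sigma> using gal_subring_hom[OF assms] .
  show ?thesis
    using hom_power[OF Qzeta_zeta_power[OF assms(2), of 1], of p] assms(2) by (simp add: hom_one)
qed

lemma common_denominator:
  fixes c :: "'a \<Rightarrow> rat"
  assumes "finite A"
  shows "\<exists>D::int. D > 0 \<and> (\<forall>k\<in>A. of_int D * c k \<in> \<int>)"
  using assms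
proof (induction A rule: finite_induct)
  case (insert a A)
  then obtain D where D: "D > 0" "\<forall>k\<in>A. of_int D * c k \<in> \<int>" by blast
  obtain m d where md: "quotient_of (c a) = (m, d)" by (metis surj_pair)
  have "d > 0" using quotient_of_denom_pos[OF md] .
  have "of_int (D * d) * c a = of_int (D * m)"
    using quotient_of_div[OF md] \<open>d > 0\<close> by simp
  hence "of_int (D * d) * c a \<in> \<int>"
    by (simp only: Ints_of_int)
  moreover have "of_int (D * d) * c k \<in> \<int>" if "k \<in> A" for k
    using D(2) that by (metis Ints_mult Ints_of_int mult.assoc mult.commute of_int_mult)
  ultimately show ?case
    using D(1) \<open>d > 0\<close> by (intro exI[of _ "D * d"]) auto
qed (auto intro: exI[of _ 1])

lemma Qzeta_imp_Zzeta_multiple: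
  assumes "x \<in> Qzeta p" shows "\<exists>D::int. D > 0 \<and> of_int D * x \<in> Zzeta p"
proof -
  obtain c where c: "x = (\<Sum>k<p. of_rat (c k) * zeta p ^ k)"
    using assms unfolding Qzeta_def by blast
  obtain D :: int where D: "D > 0" "\<forall>k<p. of_int D * c k \<in> \<int>"
    using common_denominator[of "{..<p}" c] by auto
  have "of_int D * x = (\<Sum>k<p. of_rat (of_int D * c k) * zeta p ^ k)"
    by (simp add: c sum_distrib_left of_rat_mult mult_ac)
  also have "\<dots> \<in> Zzeta p"
    using D(2) by (auto intro!: Zzeta_sum Zzeta_mult Zzeta_power Zzeta_zeta Zzeta_of_int elim!: Ints_cases)
  finally show ?thesis using D(1) by blast
qed

theorem Qzeta_real_if_power_real:
  assumes p: "prime p" and q: "prime q" "odd q" and pq: "p \<noteq> q"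
    and \<beta>: "\<beta> \<in> Qzeta p" "cnj (\<beta> ^ q) = \<beta> ^ q"
  shows "cnj \<beta> = \<beta>"
proof -
  obtain D :: int where D: "D > 0" "of_int D * \<beta> \<in> Zzeta p"
    using Qzeta_imp_Zzeta_multiple[OF \<beta>(1)] by blast
  define u where "u = of_int D * \<beta>"
  have "cnj u ^ q = u ^ q"
    using \<beta>(2) by (simp add: u_def power_mult_distrib flip: complex_cnj_power)
  moreover have "u \<in> Zzeta p"
    using D(2) by (simp add: u_def)
  moreover from this have "cnj u \<in> Zzeta p"
    by (rule Zzeta_cnj[OF prime_gt_0_nat[OF p]])
  ultimately have "u = 0 \<or> cnj u = u"
    using Zzeta_power_prime_eq_imp_eq[OF p q pq] by blast
  thus ?thesis using D(1) by (auto simp: u_def)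
qed

definition eta_span :: "nat \<Rightarrow> nat \<Rightarrow> complex set" where
  "eta_span p m = {z. \<exists>c :: nat \<Rightarrow> rat. z = (\<Sum>k<m. of_rat (c k) * (zeta p + inverse (zeta p)) ^ k)}"

lemma eta_span_add:
  assumes "x \<in> eta_span p m" "y \<in> eta_span p m" shows "x + y \<in> eta_span p m"
proof -
  obtain c d where "x = (\<Sum>k<m. of_rat (c k) * (zeta p + inverse (zeta p)) ^ k)"
      "y = (\<Sum>k<m. of_rat (d k) * (zeta p + inverse (zeta p)) ^ k)"
    using assms unfolding eta_span_def by blast
  thus ?thesis unfolding eta_span_def
    by (intro CollectI exI[of _ "\<lambda>k. c k + d k"]) (simp add: of_rat_add distrib_right sum.distrib)
qed

lemma eta_span_of_rat_mult:
  assumes "x \<in> eta_span p m" shows "of_rat r * x \<in> eta_span p m"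
proof -
  obtain c where "x = (\<Sum>k<m. of_rat (c k) * (zeta p + inverse (zeta p)) ^ k)"
    using assms unfolding eta_span_def by blast
  thus ?thesis unfolding eta_span_def
    by (intro CollectI exI[of _ "\<lambda>k. r * c k"]) (simp add: of_rat_mult sum_distrib_left mult_ac)
qed

lemma eta_span_diff: "x \<in> eta_span p m \<Longrightarrow> y \<in> eta_span p m \<Longrightarrow> x - y \<in> eta_span p m"
  using eta_span_add[OF _ eta_span_of_rat_mult[of y p m "-1"]] by simp

lemma eta_span_sum: "(\<And>i. i \<in> A \<Longrightarrow> f i \<in> eta_span p m) \<Longrightarrow> sum f A \<in> eta_span p m"
proof (induction A rule: infinite_finite_induct)
  case (infinite A)
  show ?case unfolding eta_span_def using infinite by (auto intro!: exI[of _ "\<lambda>_. 0"])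
next
  case empty
  show ?case unfolding eta_span_def by (auto intro!: exI[of _ "\<lambda>_. 0"])
qed (simp add: eta_span_add)

lemma eta_span_mono:
  assumes "m \<le> m'" "x \<in> eta_span p m" shows "x \<in> eta_span p m'"
proof -
  let ?\<eta> = "zeta p + inverse (zeta p)"
  obtain c where c: "x = (\<Sum>k<m. of_rat (c k) * ?\<eta> ^ k)"
    using assms(2) unfolding eta_span_def by blast
  have "(\<Sum>k<m'. of_rat (if k < m then c k else 0) * ?\<eta> ^ k) = (\<Sum>k<m. of_rat (c k) * ?\<eta> ^ k)"
    using assms(1) by (intro sum.mono_neutral_cong_right) auto
  thus ?thesis
    unfolding eta_span_def c by (intro CollectI exI[of _ "\<lambda>k. if k < m then c k else 0"]) (rule sym)
qed

lemma eta_span_mult_eta: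
  assumes "x \<in> eta_span p m" shows "(zeta p + inverse (zeta p)) * x \<in> eta_span p (Suc m)"
proof -
  let ?\<eta> = "zeta p + inverse (zeta p)"
  obtain c where c: "x = (\<Sum>k<m. of_rat (c k) * ?\<eta> ^ k)"
    using assms unfolding eta_span_def by blast
  have "(\<Sum>k<Suc m. of_rat (case k of 0 \<Rightarrow> 0 | Suc j \<Rightarrow> c j) * ?\<eta> ^ k) = ?\<eta> * x"
    by (subst sum.lessThan_Suc_shift) (simp add: c sum_distrib_left mult_ac)
  thus ?thesis unfolding eta_span_def by (intro CollectI exI) (rule sym)
qed

lemma zeta_power_add_inverse_in_eta_span:
  "zeta p ^ k + inverse (zeta p) ^ k \<in> eta_span p (Suc k)"
proof (induction k rule: less_induct)
  case (less k)
  let ?\<eta> = "zeta p + inverse (zeta p)"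
  consider "k = 0" | "k = 1" | j where "k = Suc (Suc j)"
    by (metis One_nat_def not0_implies_Suc)
  thus ?case
  proof cases
    case 1
    show ?thesis unfolding 1 eta_span_def by (intro CollectI exI[of _ "\<lambda>_. 2"]) simp
  next
    case 2
    show ?thesis unfolding 2 eta_span_def
      by (intro CollectI exI[of _ "\<lambda>k. if k = 1 then 1 else 0"]) (simp add: lessThan_Suc)
  next
    case 3
    have "zeta p ^ k + inverse (zeta p) ^ k
        = ?\<eta> * (zeta p ^ Suc j + inverse (zeta p) ^ Suc j) - (zeta p ^ j + inverse (zeta p) ^ j)"
      using 3 zeta_neq_0 by (simp add: field_simps power_Suc)
    moreover have "?\<eta> * (zeta p ^ Suc j + inverse (zeta p) ^ Suc j) \<in> eta_span p (Suc k)"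
      using eta_span_mult_eta[OF less[of "Suc j"]] 3 by simp
    moreover have "zeta p ^ j + inverse (zeta p) ^ j \<in> eta_span p (Suc k)"
      using eta_span_mono[OF _ less[of j]] 3 by simp
    ultimately show ?thesis by (simp add: eta_span_diff)
  qed
qed

theorem Qzeta_plus_if_real:
  assumes "x \<in> Qzeta p" "cnj x = x" shows "x \<in> Qzeta_plus p"
proof -
  obtain c where c: "x = (\<Sum>k<p. of_rat (c k) * zeta p ^ k)"
    using assms(1) unfolding Qzeta_def by blast
  have "cnj (zeta p) = inverse (zeta p)"
    by (simp add: zeta_def cis_cnj)
  hence "cnj x = (\<Sum>k<p. of_rat (c k) * inverse (zeta p) ^ k)"
    by (simp add: c)
  hence "x + cnj x = (\<Sum>k<p. of_rat (c k) * (zeta p ^ k + inverse (zeta p) ^ k))"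
    by (simp add: c distrib_left sum.distrib)
  moreover have "x = (x + cnj x) / 2"
    using assms(2) by simp
  ultimately have "x = (\<Sum>k<p. of_rat (c k / 2) * (zeta p ^ k + inverse (zeta p) ^ k))"
    by (simp add: sum_divide_distrib of_rat_divide)
  also have "\<dots> \<in> eta_span p p"
    by (intro eta_span_sum eta_span_of_rat_mult eta_span_mono[OF _ zeta_power_add_inverse_in_eta_span])
      simp
  finally show ?thesis by (simp add: eta_span_def Qzeta_plus_def)
qed

section \<open>The power series \<open>F\<^sub>\<theta>\<close> and its conjugates\<close>

definition F_theta_at :: "nat \<Rightarrow> nat \<Rightarrow> (nat \<Rightarrow> int) \<Rightarrow> complex \<Rightarrow> complex fps" where
  "F_theta_at p q n \<xi> = (\<Prod>a\<in>{1..p-1}. binom_fps (\<xi> ^ a) (of_int (n a) / of_nat q))"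

lemma F_theta_eq_at_zeta: "F_theta p q n = F_theta_at p q n (zeta p)"
  by (simp add: F_theta_def F_theta_at_def)

lemma binom_fps_nth_rat:
  "fps_nth (binom_fps c (of_int m / of_nat q)) k
     = of_rat (((of_int m / of_nat q) gchoose k) * (-1) ^ k) * c ^ k"
proof -
  have "(of_int m / of_nat q :: complex) = of_rat (of_int m / of_nat q)"
    by (simp add: of_rat_divide)
  moreover have "(of_rat x gchoose k :: complex) = of_rat (x gchoose k)" for x
    unfolding gbinomial_altdef_of_nat of_rat_prod by (simp add: of_rat_diff of_rat_divide)
  ultimately show ?thesis
    by (simp add: binom_fps_def power_minus[of c] of_rat_mult of_rat_power)
qed

lemma F_theta_nth_Qzeta:
  assumes "p > 0" shows "fps_nth (F_theta p q n) k \<in> Qzeta p"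
proof -
  interpret subring "Qzeta p" using subring_Qzeta[OF assms] .
  show ?thesis
    unfolding F_theta_eq_at_zeta F_theta_at_def
    by (intro fps_nth_prod_closed)
      (simp add: binom_fps_nth_rat Qzeta_of_rat_mult power_closed Qzeta_zeta_power[OF assms])
qed

lemma gal_F_theta_nth:
  assumes \<sigma>: "\<sigma> \<in> gal p" and p: "p > 0"
  shows "\<sigma> (fps_nth (F_theta p q n) k) = fps_nth (F_theta_at p q n (\<sigma> (zeta p))) k"
proof -
  interpret subring_hom "Qzeta p" \<sigma> using gal_subring_hom[OF assms] .
  have \<zeta>: "zeta p ^ a \<in> Qzeta p" for a by (rule Qzeta_zeta_power[OF p])
  have \<sigma>\<zeta>: "\<sigma> (zeta p ^ a) = \<sigma> (zeta p) ^ a" for a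
    using hom_power[OF Qzeta_zeta_power[OF p, of 1]] by simp
  have "fps_map (binom_fps (zeta p ^ a) r) = binom_fps (\<sigma> (zeta p) ^ a) r"
    if "r = of_int (n a) / of_nat q" for a r
    using \<zeta> unfolding that
    by (intro fps_ext) (simp add: binom_fps_nth_rat hom_mult \<sigma>\<zeta> Qzeta_of_rat p
                          gal_of_rat[OF \<sigma> p] flip: power_mult)
  hence "fps_map (F_theta p q n) = F_theta_at p q n (\<sigma> (zeta p))"
    unfolding F_theta_eq_at_zeta F_theta_at_def
    by (subst fps_map_prod)
      (simp_all add: binom_fps_nth_rat Qzeta_of_rat_mult power_closed \<zeta>)
  thus ?thesis by (metis fps_map_nth)
qed

lemma cnj_F_theta_at_nth:
  assumes p: "p > 0" and \<xi>: "\<xi> ^ p = 1" and n_sym: "\<forall>a\<in>{1..p-1}. n (p - a) = n a"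
  shows "cnj (fps_nth (F_theta_at p q n \<xi>) k) = fps_nth (F_theta_at p q n \<xi>) k"
proof -
  interpret cnj: subring_hom UNIV cnj by unfold_locales simp_all
  have c: "cnj \<xi> ^ a = \<xi> ^ (p - a)" if "a \<in> {1..p-1}" for a
    using cnj_root_of_unity_power[OF \<xi> p, of a] that by auto
  have "cnj.fps_map (F_theta_at p q n \<xi>)
      = (\<Prod>a\<in>{1..p-1}. binom_fps (\<xi> ^ (p - a)) (of_int (n a) / of_nat q))"
    unfolding F_theta_at_def cnj.fps_map_prod[OF UNIV_I]
    by (intro prod.cong refl fps_ext) (simp add: binom_fps_nth_rat c)
  also have "\<dots> = F_theta_at p q n \<xi>"
    unfolding F_theta_at_def
    by (rule prod.reindex_bij_witness[of _ "\<lambda>b. p - b" "\<lambda>a. p - a"]) (auto simp: n_sym)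
  finally show ?thesis by (metis cnj.fps_map_nth)
qed

section \<open>Evaluating \<open>F\<^sub>\<theta>\<close> inside the unit disc\<close>

lemma binom_fps_sums:
  assumes c: "norm c = 1" and z: "norm z < 1"
  shows "(\<lambda>k. fps_nth (binom_fps c r) k * z ^ k) sums (1 - c * z) powr r"
proof -
  have "norm (- c * z) < 1" using c z by (simp add: norm_mult)
  moreover have "fps_nth (binom_fps c r) k * z ^ k = (r gchoose k) * (- c * z) ^ k" for k
    by (simp only: binom_fps_def fps_nth_Abs_fps power_mult_distrib mult.assoc)
  ultimately show ?thesis
    using gen_binomial_complex[of "- c * z" r] by simp
qed

lemma fps_conv_radius_binom_fps:
  assumes "norm c = 1" shows "1 \<le> fps_conv_radius (binom_fps c r)"
proof -
  have "fps_conv_radius (binom_fps c r) = conv_radius (\<lambda>k. r gchoose k)"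
    unfolding fps_conv_radius_def
    by (rule conv_radius_cong) (simp add: binom_fps_def norm_mult norm_power assms)
  thus ?thesis by (simp add: conv_radius_gchoose)
qed

lemma eval_fps_prod:
  fixes f :: "'b \<Rightarrow> 'a::{banach, real_normed_field} fps"
  assumes "\<And>a. a \<in> A \<Longrightarrow> ereal (norm z) < fps_conv_radius (f a)"
  shows "ereal (norm z) < fps_conv_radius (\<Prod>a\<in>A. f a)
         \<and> eval_fps (\<Prod>a\<in>A. f a) z = (\<Prod>a\<in>A. eval_fps (f a) z)"
  using assms
proof (induction A rule: infinite_finite_induct)
  case (insert a A)
  have r: "ereal (norm z) < fps_conv_radius (f a)" "ereal (norm z) < fps_conv_radius (\<Prod>a\<in>A. f a)"
    using insert by auto
  have "ereal (norm z) < min (fps_conv_radius (f a)) (fps_conv_radius (\<Prod>a\<in>A. f a))"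
    using r by simp
  also have "\<dots> \<le> fps_conv_radius (f a * (\<Prod>a\<in>A. f a))"
    by (rule fps_conv_radius_mult)
  finally show ?case
    using insert eval_fps_mult[OF r] by simp
qed auto

lemma F_theta_at_sums:
  assumes p: "p > 0" and \<xi>: "\<xi> ^ p = 1" and z: "norm z < 1"
  shows "(\<lambda>k. fps_nth (F_theta_at p q n \<xi>) k * z ^ k)
           sums (\<Prod>a\<in>{1..p-1}. (1 - \<xi> ^ a * z) powr (of_int (n a) / of_nat q))"
proof -
  have norm_\<xi>: "norm (\<xi> ^ a) = 1" for a
    by (simp add: norm_power norm_root_of_unity[OF \<xi> p])
  have rad: "ereal (norm z) < fps_conv_radius (binom_fps (\<xi> ^ a) r)" for a r
  proof -
    have "ereal (norm z) < 1" using z by simp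
    thus ?thesis using fps_conv_radius_binom_fps[OF norm_\<xi>] by (rule order.strict_trans2)
  qed
  have ev: "eval_fps (binom_fps (\<xi> ^ a) r) z = (1 - \<xi> ^ a * z) powr r" for a r
    using sums_unique2[OF sums_eval_fps[OF rad] binom_fps_sums[OF norm_\<xi> z]] .
  have "ereal (norm z) < fps_conv_radius (F_theta_at p q n \<xi>)
        \<and> eval_fps (F_theta_at p q n \<xi>) z
            = (\<Prod>a\<in>{1..p-1}. eval_fps (binom_fps (\<xi> ^ a) (of_int (n a) / of_nat q)) z)"
    unfolding F_theta_at_def by (rule eval_fps_prod) (rule rad)
  thus ?thesis
    using sums_eval_fps[of z "F_theta_at p q n \<xi>"] by (simp add: ev)
qed

lemma one_minus_mult_root_of_unity_neq_0:
  fixes \<xi> t :: complex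
  assumes "\<xi> ^ p = 1" "p > 0" "norm t < 1"
  shows "1 - t * \<xi> ^ a \<noteq> 0"
proof
  assume "1 - t * \<xi> ^ a = 0"
  hence "norm (t * \<xi> ^ a) = 1" by (simp add: right_minus_eq)
  thus False using assms by (simp add: norm_mult norm_power norm_root_of_unity)
qed

lemma power_powr_of_int_div:
  fixes w :: complex
  assumes "w \<noteq> 0" "q > 0"
  shows "(w powr (of_int m / of_nat q)) ^ q = w powi m"
proof -
  have "(w powr (of_int m / of_nat q)) ^ q = exp (of_nat q * (of_int m / of_nat q * ln w))"
    using assms(1) by (simp add: powr_def flip: exp_of_nat_mult)
  also have "\<dots> = w powr of_int m"
    using assms by (simp add: powr_def)
  finally show ?thesis
    using assms(1) by (simp add: complex_powr_of_int)
qed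

lemma norm_of_rat_less_1:
  assumes "\<bar>t\<bar> < 1" shows "norm (of_rat t :: complex) < 1"
proof -
  have "of_rat \<bar>t\<bar> < (of_rat 1 :: real)"
    using assms by (simp only: of_rat_less)
  thus ?thesis by (simp add: complex_of_rat_eq_of_real abs_of_rat)
qed

lemma real_odd_power_eq_imp_eq:
  fixes x y :: complex
  assumes "cnj x = x" "cnj y = y" "x ^ q = y ^ q" "odd q"
  shows "x = y"
proof -
  have "x \<in> \<real>" "y \<in> \<real>" using assms(1,2) by (simp_all add: Reals_cnj_iff)
  then obtain a b :: real where ab: "x = of_real a" "y = of_real b"
    by (auto elim!: Reals_cases)
  have "of_real (a ^ q) = (of_real (b ^ q) :: complex)"
    using assms(3) by (simp add: ab)
  hence "root q (a ^ q) = root q (b ^ q)"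
    by (simp only: of_real_eq_iff)
  hence "a = b"
    using assms(4) by (simp add: odd_real_root_power_cancel)
  thus ?thesis using ab by simp
qed

text \<open>The value of \<open>F\<^sub>\<theta>\<^sup>\<sigma>\<close> at \<open>t\<close> is a real \<open>q\<close>-th root of \<open>(1 - t\<sigma>(\<zeta>\<^sub>p))\<^sup>\<theta>\<close>
  (real because \<open>\<theta>\<close> is invariant under \<open>\<iota>\<close>); a root \<open>\<beta>\<close> in \<open>\<rat>(\<zeta>\<^sub>p)\<close> is real as well,
  and an odd-degree real root is unique.\<close>

theorem F_theta_at_sums_root:
  assumes p: "prime p" and q: "prime q" "odd q" and pq: "p \<noteq> q"
    and n_sym: "\<forall>a\<in>{1..p-1}. n (p - a) = n a"
    and \<xi>: "\<xi> ^ p = 1" and t: "\<bar>t\<bar> < 1"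
    and \<beta>: "\<beta> \<in> Qzeta p" "\<beta> ^ q = (\<Prod>a\<in>{1..p-1}. (1 - of_rat t * \<xi> ^ a) powi n a)"
  shows "cnj \<beta> = \<beta> \<and> (\<lambda>k. fps_nth (F_theta_at p q n \<xi>) k * of_rat t ^ k) sums \<beta>"
proof -
  have p0: "p > 0" using prime_gt_0_nat[OF p] .
  define E where "E = (\<Prod>a\<in>{1..p-1}. (1 - \<xi> ^ a * of_rat t) powr (of_int (n a) / of_nat q))"
  have sums: "(\<lambda>k. fps_nth (F_theta_at p q n \<xi>) k * of_rat t ^ k) sums E"
    unfolding E_def by (rule F_theta_at_sums[OF p0 \<xi> norm_of_rat_less_1[OF t]])
  hence "(\<lambda>k. fps_nth (F_theta_at p q n \<xi>) k * of_rat t ^ k) sums cnj E"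
    using sums_cnj[THEN iffD2, OF sums] by (simp add: cnj_F_theta_at_nth[OF p0 \<xi> n_sym])
  hence "cnj E = E" using sums sums_unique2 by blast
  have "E ^ q = (\<Prod>a\<in>{1..p-1}. ((1 - \<xi> ^ a * of_rat t) powr (of_int (n a) / of_nat q)) ^ q)"
    unfolding E_def by (rule prod_power_distrib)
  also have "\<dots> = \<beta> ^ q"
    using one_minus_mult_root_of_unity_neq_0[OF \<xi> p0 norm_of_rat_less_1[OF t]]
      prime_gt_0_nat[OF q(1)]
    by (simp add: \<beta>(2) power_powr_of_int_div mult.commute)
  finally have "E ^ q = \<beta> ^ q" .
  have "cnj (\<beta> ^ q) = cnj E ^ q"
    using \<open>E ^ q = \<beta> ^ q\<close> by (simp flip: complex_cnj_power)
  hence "cnj (\<beta> ^ q) = \<beta> ^ q"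
    using \<open>cnj E = E\<close> \<open>E ^ q = \<beta> ^ q\<close> by simp
  hence "cnj \<beta> = \<beta>"
    by (rule Qzeta_real_if_power_real[OF p q pq \<beta>(1)])
  moreover have "\<beta> = E"
    using real_odd_power_eq_imp_eq[OF \<open>cnj \<beta> = \<beta>\<close> \<open>cnj E = E\<close> _ q(2)] \<open>E ^ q = \<beta> ^ q\<close> by simp
  ultimately show ?thesis using sums by simp
qed

lemma gal_prod_power_int_eq_power:
  assumes \<sigma>: "\<sigma> \<in> gal p" and p: "p > 0" and t: "\<bar>t\<bar> < 1" and \<alpha>: "\<alpha> \<in> Qzeta p"
    and eq: "(\<Prod>a\<in>{1..p-1}. (1 - of_rat t * zeta p ^ a) powi n a) = \<alpha> ^ q"
  shows "(\<Prod>a\<in>{1..p-1}. (1 - of_rat t * \<sigma> (zeta p) ^ a) powi n a) = \<sigma> \<alpha> ^ q"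
proof -
  interpret subring_hom "Qzeta p" \<sigma> using gal_subring_hom[OF \<sigma> p] .
  have \<zeta>: "zeta p \<in> Qzeta p" using Qzeta_zeta_power[OF p, of 1] by simp
  have w: "1 - of_rat t * zeta p ^ a \<in> Qzeta p" for a
    by (intro diff_closed one_closed Qzeta_of_rat_mult power_closed \<zeta>)
  have \<sigma>w: "\<sigma> (1 - of_rat t * zeta p ^ a) = 1 - of_rat t * \<sigma> (zeta p) ^ a" for a
    using \<zeta> by (simp add: hom_diff hom_mult hom_power hom_one one_closed Qzeta_of_rat p power_closed
                      Qzeta_of_rat_mult gal_of_rat[OF \<sigma> p])
  have "\<sigma> (\<alpha> ^ q) = (\<Prod>a\<in>{1..p-1}. \<sigma> (1 - of_rat t * zeta p ^ a) powi n a)"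
  proof (rule subring_hom_prod_power_int[OF gal_subring_hom[OF \<sigma> p]])
    show "\<alpha> ^ q \<in> Qzeta p" using \<alpha> by (rule power_closed)
    show "\<alpha> ^ q = (\<Prod>a\<in>{1..p-1}. (1 - of_rat t * zeta p ^ a) powi n a)" using eq by simp
    show "1 - of_rat t * zeta p ^ a \<in> Qzeta p \<and> 1 - of_rat t * zeta p ^ a \<noteq> 0
          \<and> \<sigma> (1 - of_rat t * zeta p ^ a) \<noteq> 0" for a
      using w one_minus_mult_root_of_unity_neq_0[OF zeta_power_p[OF p] p norm_of_rat_less_1[OF t]]
        one_minus_mult_root_of_unity_neq_0[OF gal_zeta_power_p[OF \<sigma> p] p norm_of_rat_less_1[OF t]]
      by (simp add: \<sigma>w)
  qed
  thus ?thesis using \<alpha> by (simp add: hom_power \<sigma>w)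
qed

lemma reflection_invariant_if_in_one_plus_iota:
  fixes n m :: "nat \<Rightarrow> int"
  assumes "\<forall>a\<in>{1..p-1}. n a = m a + m (p - a)"
  shows "\<forall>a\<in>{1..p-1}. n (p - a) = n a"
proof
  fix a assume a: "a \<in> {1..p-1}"
  have "p - a \<in> {1..p-1}" "p - (p - a) = a" using a by auto
  thus "n (p - a) = n a" using assms a by (simp add: add.commute)
qed

lemma gal_F_theta_sums:
  assumes p: "prime p" and q: "prime q" "odd q" and pq: "p \<noteq> q"
    and n_sym: "\<forall>a\<in>{1..p-1}. n (p - a) = n a" and \<sigma>: "\<sigma> \<in> gal p"
    and t: "\<bar>t\<bar> < 1" and \<alpha>: "\<alpha> \<in> Qzeta p"
    and eq: "(\<Prod>a\<in>{1..p-1}. (1 - of_rat t * zeta p ^ a) powi n a) = \<alpha> ^ q"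
  shows "(\<lambda>k. \<sigma> (fps_nth (F_theta p q n) k) * of_rat t ^ k) sums \<sigma> \<alpha>"
proof -
  have p0: "p > 0" using prime_gt_0_nat[OF p] .
  show ?thesis
    using F_theta_at_sums_root[OF p q pq n_sym gal_zeta_power_p[OF \<sigma> p0] t gal_closed[OF \<sigma> \<alpha>]
            gal_prod_power_int_eq_power[OF \<sigma> p0 t \<alpha> eq, symmetric]]
    by (simp add: gal_F_theta_nth[OF \<sigma> p0])
qed

theorem proposition4:
  fixes p q :: nat and n :: "nat \<Rightarrow> int"
  assumes "prime p" and "prime q" and "odd p" and "odd q" and "p \<noteq> q"
    and "\<exists>m :: nat \<Rightarrow> int. \<forall>a\<in>{1..p-1}. n a = m a + m (p - a)"
  shows "(\<forall>k. fps_nth (F_theta p q n) k \<in> Qzeta_plus p)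
    \<and> (\<forall>(t::rat) \<alpha>. \<bar>t\<bar> < 1 \<and> \<alpha> \<in> Qzeta p
          \<and> (\<Prod>a\<in>{1..p-1}. (1 - of_rat t * zeta p ^ a) powi n a) = \<alpha> ^ q
        \<longrightarrow> \<alpha> \<in> Qzeta_plus p
          \<and> (\<forall>\<sigma>\<in>gal p. (\<lambda>k. \<sigma> (fps_nth (F_theta p q n) k) * of_rat t ^ k) sums \<sigma> \<alpha>))"
proof -
  note p = assms(1) and q = assms(2,4) and pq = assms(5)
  have p0: "p > 0" using prime_gt_0_nat[OF p] .
  have n_sym: "\<forall>a\<in>{1..p-1}. n (p - a) = n a"
    using assms(6) reflection_invariant_if_in_one_plus_iota by blast
  have "fps_nth (F_theta p q n) k \<in> Qzeta_plus p" for k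
    using F_theta_nth_Qzeta[OF p0] cnj_F_theta_at_nth[OF p0 zeta_power_p[OF p0] n_sym]
    by (intro Qzeta_plus_if_real) (simp_all add: F_theta_eq_at_zeta)
  moreover have "\<alpha> \<in> Qzeta_plus p"
    if "\<bar>t\<bar> < 1" "\<alpha> \<in> Qzeta p" "(\<Prod>a\<in>{1..p-1}. (1 - of_rat t * zeta p ^ a) powi n a) = \<alpha> ^ q"
    for t \<alpha>
    using F_theta_at_sums_root[OF p q pq n_sym zeta_power_p[OF p0] that(1,2) that(3)[symmetric]]
    by (intro Qzeta_plus_if_real[OF that(2)]) simp
  ultimately show ?thesis
    using gal_F_theta_sums[OF p q pq n_sym] by blast
qed

end
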